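(* The action of the additive group $\mathfrak h$ on $\mathfrak h$ by translation extends to the action on $\bar{\mathfrak h}$ given by $y\cdot(x_\lambda)_\lambda=(x_\lambda+\lambda(y))_\lambda$ (with $\infty+c=\infty$), and $$\bar{\mathfrak h}=\bigsqcup_{k=0}^{r}\ \bigsqcup_{\Psi\ \text{$k$-step good}}\mathring C(\Psi),$$ a disjoint union over all $k$-step good root subsystems $\Psi$ of $\Phi$, $0\le k\le r$. The sets $\mathring C(\Psi)$ are exactly the $\mathfrak h$-orbits on $\bar{\mathfrak h}$ (in particular there are finitely many, and $\mathring C(\Phi)=\mathfrak h$ is the open orbit), each $\mathring C(\Psi)$ is isomorphic to an affine space of dimension $\operatorname{rk}\Psi=r-k$, and this decomposition is an affine paving of $\bar{\mathfrak h}$.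
   Context: Let $\mathfrak g$ be a complex semisimple Lie algebra, $\mathfrak h$ a Cartan subalgebra, $r=\dim\mathfrak h$, $\Phi\subset\mathfrak h^*$ its root system, $\Phi^+$ a fixed set of positive roots, $d=|\Phi^+|$. Identify $\mathbb C$ with $\{[x_0:x_1]:x_0\ne0\}\subset\mathbb P^1$ via $c\mapsto[1:c]$, $\infty=[0:1]$; points of $(\mathbb P^1)^d$ are $x=(x_\lambda)_{\lambda\in\Phi^+}$. Identify $\mathfrak h$ with its image under $h\mapsto(\lambda(h))_{\lambda\in\Phi^+}\in\mathbb C^d\subset(\mathbb P^1)^d$; $\bar{\mathfrak h}$ is the Zariski closure of $\mathfrak h$ in $(\mathbb P^1)^d$. A root subsystem $\Psi\subseteq\Phi$ is closed if $\lambda,\mu\in\Psi$, $\lambda+\mu\in\Phi$ imply $\lambda+\mu\in\Psi$; $\operatorname{rk}\Psi=\dim\operatorname{Span}\Psi$. A good root subsystem of a root system $\Theta$ of rank $m$ is a closed root subsystem of rank $m-1$ maximal under inclusion among closed root subsystems of rank $m-1$. The $0$-step good root subsystem of $\Phi$ is $\Phi$; for $k\ge1$, a $k$-step good root subsystem is a good root subsystem of a $(k-1)$-step good root subsystem. For a closed root subsystem $\Psi$ with $\Psi^+=\Psi\cap\Phi^+$, $\mathring C(\Psi)$ is the set of $x\in(\mathbb P^1)^d$ with $x_\lambda=\infty$ for $\lambda\in\Phi^+\setminus\Psi$ and $(x_\lambda)_{\lambda\in\Psi^+}=(\lambda(h))_{\lambda\in\Psi^+}$ for some $h\in\mathfrak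 h$. *)

theory Defs
  imports "HOL-Analysis.Analysis"
begin

text \<open>The Cartan subalgebra h is modelled as complex^'n, its dual is the complexification
 of real^'n, and a root lam :: real^'n acts on h :: complex^'n by the pairing below.
 The roots of a complex semisimple Lie algebra form exactly a reduced crystallographic
 root system spanning real^'n (with respect to some invariant inner product; after a
 linear change of coordinates this may be taken to be the standard one).\<close>

definition pairing :: "real^'n \<Rightarrow> complex^'n \<Rightarrow> complex" where
  "pairing lam h = (\<Sum>i\<in>UNIV. complex_of_real (lam $ i) * h $ i)"

definition reflect :: "real^'n \<Rightarrow> real^'n \<Rightarrow> real^'n" where
  "reflect a b = b - (2 * (b \<bullet> a) / (a \<bullet> a)) *\<^sub>R a"

definition root_system :: "(real^'n) set \<Rightarrow> bool" where
  "root_system R \<longleftrightarrow> finite R \<and> 0 \<notin> R \<and> span R = UNIV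
     \<and> (\<forall>a\<in>R. \<forall>b\<in>R. reflect a b \<in> R)
     \<and> (\<forall>a\<in>R. \<forall>b\<in>R. 2 * (b \<bullet> a) / (a \<bullet> a) \<in> \<int>)
     \<and> (\<forall>a\<in>R. \<forall>c::real. c *\<^sub>R a \<in> R \<longrightarrow> c = 1 \<or> c = -1)"

definition positive_system :: "(real^'n) set \<Rightarrow> (real^'n) set \<Rightarrow> bool" where
  "positive_system R P \<longleftrightarrow>
     (\<exists>f. (\<forall>a\<in>R. f \<bullet> a \<noteq> 0) \<and> P = {a\<in>R. f \<bullet> a > 0})"

definition root_subsystem :: "(real^'n) set \<Rightarrow> (real^'n) set \<Rightarrow> bool" where
  "root_subsystem T S \<longleftrightarrow> S \<subseteq> T \<and> (\<forall>a\<in>S. - a \<in> S) \<and> (\<forall>a\<in>S. \<forall>b\<in>S. reflect a b \<in> S)"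

definition closed_in_rs :: "(real^'n) set \<Rightarrow> (real^'n) set \<Rightarrow> bool" where
  "closed_in_rs T S \<longleftrightarrow> (\<forall>a\<in>S. \<forall>b\<in>S. a + b \<in> T \<longrightarrow> a + b \<in> S)"

definition closed_root_subsystem :: "(real^'n) set \<Rightarrow> (real^'n) set \<Rightarrow> bool" where
  "closed_root_subsystem T S \<longleftrightarrow> root_subsystem T S \<and> closed_in_rs T S"

definition rk :: "(real^'n) set \<Rightarrow> nat" where
  "rk S = dim (span S)"

definition good_root_subsystem :: "(real^'n) set \<Rightarrow> (real^'n) set \<Rightarrow> bool" where
  "good_root_subsystem T S \<longleftrightarrow>
     closed_root_subsystem T S \<and> rk S + 1 = rk T \<and>
     (\<forall>S'. closed_root_subsystem T S' \<and> rk S' + 1 = rk T \<and> S \<subseteq> S' \<longrightarrow> S' = S)"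

fun kstep_good :: "(real^'n) set \<Rightarrow> nat \<Rightarrow> (real^'n) set \<Rightarrow> bool" where
  "kstep_good R 0 S = (S = R)"
| "kstep_good R (Suc k) S = (\<exists>T. kstep_good R k T \<and> good_root_subsystem T S)"

text \<open>A point of P^1 is a complex option: Some c = [1:c], None = infinity.
 A point of (P^1)^d is a map from roots to P^1, indexed by the positive roots P
 (value None outside P, by convention).\<close>

definition Pd :: "(real^'n) set \<Rightarrow> (real^'n \<Rightarrow> complex option) set" where
  "Pd P = {x. \<forall>lam. lam \<notin> P \<longrightarrow> x lam = None}"

definition emb :: "(real^'n) set \<Rightarrow> complex^'n \<Rightarrow> (real^'n \<Rightarrow> complex option)" where
  "emb P h = (\<lambda>lam. if lam \<in> P then Some (pairing lam h) else None)"

definition hset :: "(real^'n) set \<Rightarrow> (real^'n \<Rightarrow> complex option) set" where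
  "hset P = range (emb P)"

definition act :: "complex^'n \<Rightarrow> (real^'n \<Rightarrow> complex option) \<Rightarrow> (real^'n \<Rightarrow> complex option)" where
  "act y x = (\<lambda>lam. map_option (\<lambda>c. c + pairing lam y) (x lam))"

definition orbit :: "(real^'n \<Rightarrow> complex option) \<Rightarrow> (real^'n \<Rightarrow> complex option) set" where
  "orbit x = {act y x | y. True}"

definition Cring :: "(real^'n) set \<Rightarrow> (real^'n) set \<Rightarrow> (real^'n \<Rightarrow> complex option) set" where
  "Cring P S = {x \<in> Pd P. (\<forall>lam\<in>P - S. x lam = None) \<and>
                  (\<exists>h. \<forall>lam\<in>P \<inter> S. x lam = Some (pairing lam h))}"

inductive_set poly_fun :: "(('v \<Rightarrow> complex) \<Rightarrow> complex) set" where
  pf_const: "(\<lambda>v. c) \<in> poly_fun"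
| pf_var: "(\<lambda>v. v i) \<in> poly_fun"
| pf_add: "p \<in> poly_fun \<Longrightarrow> q \<in> poly_fun \<Longrightarrow> (\<lambda>v. p v + q v) \<in> poly_fun"
| pf_mult: "p \<in> poly_fun \<Longrightarrow> q \<in> poly_fun \<Longrightarrow> (\<lambda>v. p v * q v) \<in> poly_fun"

definition aff_space :: "'v set \<Rightarrow> ('v \<Rightarrow> complex) set" where
  "aff_space I = {v. \<forall>i. i \<notin> I \<longrightarrow> v i = 0}"

definition aff_closed :: "'v set \<Rightarrow> ('v \<Rightarrow> complex) set \<Rightarrow> bool" where
  "aff_closed I Z \<longleftrightarrow> (\<exists>F \<subseteq> poly_fun. Z = {v \<in> aff_space I. \<forall>f\<in>F. f v = 0})"

text \<open>Standard affine charts of (P^1)^d: for A a subset of P, coordinate x_lam for lam in A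
 and 1/x_lam for lam not in A.\<close>
definition chart :: "(real^'n) set \<Rightarrow> (real^'n) set \<Rightarrow> (real^'n \<Rightarrow> complex option) set" where
  "chart P A = {x \<in> Pd P. \<forall>lam\<in>P. (lam \<in> A \<longrightarrow> x lam \<noteq> None) \<and> (lam \<notin> A \<longrightarrow> x lam \<noteq> Some 0)}"

definition ccoord :: "(real^'n) set \<Rightarrow> (real^'n) set \<Rightarrow> (real^'n \<Rightarrow> complex option) \<Rightarrow> (real^'n \<Rightarrow> complex)" where
  "ccoord P A x = (\<lambda>lam. if lam \<in> P then
       (if lam \<in> A then the (x lam) else (case x lam of None \<Rightarrow> 0 | Some c \<Rightarrow> inverse c))
     else 0)"

definition zclosed :: "(real^'n) set \<Rightarrow> (real^'n \<Rightarrow> complex option) set \<Rightarrow> bool" where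
  "zclosed P Z \<longleftrightarrow> Z \<subseteq> Pd P \<and> (\<forall>A\<subseteq>P. aff_closed P (ccoord P A ` (Z \<inter> chart P A)))"

definition zclosure :: "(real^'n) set \<Rightarrow> (real^'n \<Rightarrow> complex option) set \<Rightarrow> (real^'n \<Rightarrow> complex option) set" where
  "zclosure P S = \<Inter>{Z. zclosed P Z \<and> S \<subseteq> Z}"

definition zopen_in :: "(real^'n) set \<Rightarrow> (real^'n \<Rightarrow> complex option) set \<Rightarrow> (real^'n \<Rightarrow> complex option) set \<Rightarrow> bool" where
  "zopen_in P X U \<longleftrightarrow> U \<subseteq> X \<and> (\<exists>Z. zclosed P Z \<and> X - U = X \<inter> Z)"

text \<open>A subset S of (P^1)^d lying in a standard affine chart is isomorphic (as a variety)
 to affine m-space: a bijection from C^m whose chart coordinates are polynomial and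
 whose inverse is given by polynomials in the chart coordinates.\<close>
definition iso_affine :: "(real^'n) set \<Rightarrow> (real^'n \<Rightarrow> complex option) set \<Rightarrow> nat \<Rightarrow> bool" where
  "iso_affine P S m \<longleftrightarrow> (\<exists>A\<subseteq>P. S \<subseteq> chart P A \<and>
     (\<exists>phi. bij_betw phi (aff_space {..<m}) S \<and>
        (\<forall>lam\<in>P. \<exists>p\<in>poly_fun. \<forall>t\<in>aff_space {..<m}. ccoord P A (phi t) lam = p t) \<and>
        (\<forall>i<m. \<exists>q\<in>poly_fun. \<forall>x\<in>S. inv_into (aff_space {..<m}) phi x i = q (ccoord P A x))))"

end

theory Submission
  imports Defs
begin

lemma pairing_add_right: "pairing lam (h + y) = pairing lam h + pairing lam y"
  unfolding pairing_def by (simp add: distrib_left sum.distrib)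

lemma pairing_scaleR_left: "pairing (c *\<^sub>R lam) h = complex_of_real c * pairing lam h"
  unfolding pairing_def by (simp add: sum_distrib_left mult.assoc)

lemma pairing_sum_left: "pairing (\<Sum>i\<in>I. f i) h = (\<Sum>i\<in>I. pairing (f i) h)"
  unfolding pairing_def by (subst sum.swap) (simp add: sum_distrib_right)

lemma pairing_scaled_real_right:
  "pairing lam (\<chi> i. t * complex_of_real (y $ i)) = t * complex_of_real (lam \<bullet> y)"
  unfolding pairing_def inner_vec_def by (simp add: sum_distrib_left algebra_simps)

lemma pairing_eq_linear:
  fixes g :: "real^'n \<Rightarrow> complex"
  assumes "linear g"
  shows "pairing lam (\<chi> i. g (axis i 1)) = g lam"
proof -
  have "g lam = g (\<Sum>i\<in>UNIV. lam $ i *\<^sub>R axis i 1)"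
    using basis_expansion[of lam] by (simp add: scalar_mult_eq_scaleR)
  also have "\<dots> = (\<Sum>i\<in>UNIV. lam $ i *\<^sub>R g (axis i 1))"
    using assms by (simp add: linear_sum linear_scale)
  finally show ?thesis unfolding pairing_def by (simp add: scaleR_conv_of_real)
qed

lemma exists_pairing_eq_on_independent:
  fixes B :: "(real^'n) set"
  assumes "independent B"
  shows "\<exists>h. \<forall>b\<in>B. pairing b h = p b"
proof -
  obtain g :: "real^'n \<Rightarrow> complex" where "linear g" "\<forall>b\<in>B. g b = p b"
    using linear_independent_extend[OF assms] by blast
  then show ?thesis using pairing_eq_linear by metis
qed

definition root_flat :: "(real^'n) set \<Rightarrow> (real^'n) set \<Rightarrow> bool" where
  "root_flat R S \<longleftrightarrow> S \<subseteq> R \<and> R \<inter> span S \<subseteq> S"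

lemma reflect_self: "a \<noteq> 0 \<Longrightarrow> reflect a a = - a"
  unfolding reflect_def by (simp add: scaleR_2)

lemma root_system_neg: "root_system R \<Longrightarrow> a \<in> R \<Longrightarrow> - a \<in> R"
  unfolding root_system_def by (metis reflect_self)

lemma root_system_reflect: "root_system R \<Longrightarrow> a \<in> R \<Longrightarrow> b \<in> R \<Longrightarrow> reflect a b \<in> R"
  unfolding root_system_def by blast

lemma rk_root_system: "root_system R \<Longrightarrow> rk R = CARD('n)" for R :: "(real^'n) set"
  unfolding rk_def root_system_def by (simp add: dim_UNIV)

lemma reflect_in_span: "a \<in> span S \<Longrightarrow> b \<in> span S \<Longrightarrow> reflect a b \<in> span S"
  unfolding reflect_def by (intro span_diff span_scale) auto

lemma root_flat_self: "root_flat R R"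
  unfolding root_flat_def by auto

lemma root_flat_Int_span: "root_flat R (R \<inter> span S)"
proof -
  have "span (R \<inter> span S) \<subseteq> span S" by (metis inf_le2 span_mono span_span)
  then show ?thesis unfolding root_flat_def by blast
qed

lemma root_flat_neg: "root_system R \<Longrightarrow> root_flat R S \<Longrightarrow> a \<in> S \<Longrightarrow> - a \<in> S"
  unfolding root_flat_def using root_system_neg span_neg span_base by blast

lemma root_flat_closed_root_subsystem:
  assumes R: "root_system R" and S: "root_flat R S" and "S \<subseteq> T" "T \<subseteq> R"
  shows "closed_root_subsystem T S"
  unfolding closed_root_subsystem_def root_subsystem_def closed_in_rs_def
proof (intro conjI ballI impI)
  show "S \<subseteq> T" by fact
  fix a assume "a \<in> S" then show "- a \<in> S" using root_flat_neg[OF R S] by blast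
next
  fix a b assume ab: "a \<in> S" "b \<in> S"
  then have "reflect a b \<in> R" using S R root_system_reflect unfolding root_flat_def by blast
  moreover have "reflect a b \<in> span S" using ab by (intro reflect_in_span) (auto intro: span_base)
  ultimately show "reflect a b \<in> S" using S unfolding root_flat_def by blast
next
  fix a b assume ab: "a \<in> S" "b \<in> S" "a + b \<in> T"
  then have "a + b \<in> span S" by (intro span_add) (auto intro: span_base)
  then show "a + b \<in> S" using S ab \<open>T \<subseteq> R\<close> unfolding root_flat_def by blast
qed

text \<open>By maximality a good subsystem S of a flat T is spanned-closed: R \<inter> span S is a
  closed subsystem of T of the same rank containing S.\<close>
lemma good_root_subsystem_root_flat:
  assumes R: "root_system R" and T: "root_flat R T" and good: "good_root_subsystem T S"
  shows "root_flat R S"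
proof -
  have closed: "closed_root_subsystem T S" and rk: "rk S + 1 = rk T"
    and max: "\<And>S'. closed_root_subsystem T S' \<Longrightarrow> rk S' + 1 = rk T \<Longrightarrow> S \<subseteq> S' \<Longrightarrow> S' = S"
    using good unfolding good_root_subsystem_def by blast+
  have "S \<subseteq> T" "T \<subseteq> R"
    using closed T unfolding closed_root_subsystem_def root_subsystem_def root_flat_def by blast+
  define S' where "S' = R \<inter> span S"
  have "S \<subseteq> S'" unfolding S'_def using \<open>S \<subseteq> T\<close> \<open>T \<subseteq> R\<close> span_base by blast
  have "S' \<subseteq> T" unfolding S'_def using T span_mono[OF \<open>S \<subseteq> T\<close>] unfolding root_flat_def by blast
  have "span S' = span S" unfolding S'_def
    using \<open>S \<subseteq> S'\<close> by (metis S'_def inf_le2 span_mono span_span subset_antisym)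
  have "root_flat R S'" unfolding S'_def by (rule root_flat_Int_span)
  then have "closed_root_subsystem T S'"
    using root_flat_closed_root_subsystem[OF R _ \<open>S' \<subseteq> T\<close> \<open>T \<subseteq> R\<close>] by blast
  moreover have "rk S' + 1 = rk T" using rk \<open>span S' = span S\<close> unfolding rk_def by simp
  ultimately have "S' = S" using max \<open>S \<subseteq> S'\<close> by blast
  then show ?thesis unfolding S'_def using root_flat_Int_span by metis
qed

lemma kstep_good_root_flat:
  fixes R :: "(real^'n) set"
  assumes R: "root_system R"
  shows "kstep_good R k S \<Longrightarrow> root_flat R S \<and> rk S + k = CARD('n)"
proof (induction k arbitrary: S)
  case 0 then show ?case using rk_root_system[OF R] root_flat_self by auto
next
  case (Suc k)
  then obtain T where T: "kstep_good R k T" "good_root_subsystem T S" by auto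
  with Suc.IH have "root_flat R T" "rk T + k = CARD('n)" by auto
  then show ?case
    using good_root_subsystem_root_flat[OF R _ T(2)] T(2) unfolding good_root_subsystem_def by auto
qed

text \<open>A flat S of rank below r is a good subsystem of the flat R \<inter> span (insert \<alpha> S) for
  any root \<alpha> outside span S.\<close>
lemma root_flat_good_extension:
  fixes R :: "(real^'n) set"
  assumes R: "root_system R" and S: "root_flat R S" and "rk S < CARD('n)"
  obtains T where "root_flat R T" "rk T = rk S + 1" "good_root_subsystem T S"
proof -
  have "\<not> R \<subseteq> span S"
  proof
    assume "R \<subseteq> span S"
    then have "span R \<subseteq> span S" by (metis span_mono span_span)
    then have "span S = UNIV" using R unfolding root_system_def by auto
    then show False using \<open>rk S < CARD('n)\<close> unfolding rk_def by (simp add: dim_UNIV)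
  qed
  then obtain \<alpha> where \<alpha>: "\<alpha> \<in> R" "\<alpha> \<notin> span S" by blast
  define T where "T = R \<inter> span (insert \<alpha> S)"
  have "S \<subseteq> R" using S unfolding root_flat_def by blast
  then have "insert \<alpha> S \<subseteq> T" unfolding T_def using \<alpha> span_base by blast
  then have "span T = span (insert \<alpha> S)"
    by (metis T_def inf_le2 span_mono span_span subset_antisym)
  then have rkT: "rk T = rk S + 1" unfolding rk_def using \<alpha>(2) by (simp add: dim_insert)
  have "root_flat R T" unfolding T_def by (rule root_flat_Int_span)
  moreover have "good_root_subsystem T S"
    unfolding good_root_subsystem_def
  proof (intro conjI allI impI)
    show "closed_root_subsystem T S"
      using root_flat_closed_root_subsystem[OF R S] \<open>insert \<alpha> S \<subseteq> T\<close> unfolding T_def by blast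
    show "rk S + 1 = rk T" using rkT by simp
    fix S' assume S': "closed_root_subsystem T S' \<and> rk S' + 1 = rk T \<and> S \<subseteq> S'"
    then have "S' \<subseteq> T" unfolding closed_root_subsystem_def root_subsystem_def by blast
    have "dim S' \<le> dim S" using S' rkT unfolding rk_def by simp
    then have "span S = span S'" using S' dim_eq_span by blast
    then show "S' = S" using S' \<open>S' \<subseteq> T\<close> S span_base unfolding T_def root_flat_def by blast
  qed
  ultimately show ?thesis using that rkT by blast
qed

lemma root_flat_kstep_good:
  fixes R :: "(real^'n) set"
  assumes R: "root_system R"
  shows "root_flat R S \<Longrightarrow> kstep_good R (CARD('n) - rk S) S"
proof (induction "CARD('n) - rk S" arbitrary: S rule: less_induct)
  case less
  have le: "rk S \<le> CARD('n)" unfolding rk_def using dim_subset_UNIV[of "span S"] by simp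
  show ?case
  proof (cases "rk S = CARD('n)")
    case True
    then have "span S = UNIV" unfolding rk_def dim_span using dim_eq_full[of S] by simp
    then have "S = R" using less.prems unfolding root_flat_def by blast
    then show ?thesis using True by simp
  next
    case False
    then obtain T where T: "root_flat R T" "rk T = rk S + 1" "good_root_subsystem T S"
      using root_flat_good_extension[OF R less.prems] le by (metis le_neq_implies_less)
    have "CARD('n) - rk T < CARD('n) - rk S" using T(2) False le by simp
    then have "kstep_good R (CARD('n) - rk T) T" using less.hyps T(1) by blast
    moreover have "CARD('n) - rk S = Suc (CARD('n) - rk T)" using T(2) False le by simp
    ultimately show ?thesis using T(3) by auto
  qed
qed

lemma kstep_good_iff_root_flat:
  fixes R :: "(real^'n) set"
  assumes R: "root_system R"
  shows "(\<exists>k\<le>CARD('n). kstep_good R k S) \<longleftrightarrow> root_flat R S"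
proof
  show "root_flat R S \<Longrightarrow> \<exists>k\<le>CARD('n). kstep_good R k S"
    using root_flat_kstep_good[OF R] diff_le_self by blast
qed (use kstep_good_root_flat[OF R] in blast)

lemma poly_fun_sum:
  "finite I \<Longrightarrow> (\<And>i. i \<in> I \<Longrightarrow> f i \<in> poly_fun) \<Longrightarrow> (\<lambda>v. \<Sum>i\<in>I. f i v) \<in> poly_fun"
proof (induction I rule: finite_induct)
  case empty then show ?case using pf_const[of 0] by simp
next
  case (insert x F) then show ?case using pf_add[of "f x" "\<lambda>v. \<Sum>i\<in>F. f i v"] by simp
qed

lemma poly_fun_prod:
  "finite I \<Longrightarrow> (\<And>i. i \<in> I \<Longrightarrow> f i \<in> poly_fun) \<Longrightarrow> (\<lambda>v. \<Prod>i\<in>I. f i v) \<in> poly_fun"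
proof (induction I rule: finite_induct)
  case empty then show ?case using pf_const[of 1] by simp
next
  case (insert x F) then show ?case using pf_mult[of "f x" "\<lambda>v. \<Prod>i\<in>F. f i v"] by simp
qed

lemma poly_fun_tendsto:
  assumes "f \<in> poly_fun" "\<And>i. ((\<lambda>s. g s i) \<longlongrightarrow> g0 i) F"
  shows "((\<lambda>s. f (g s)) \<longlongrightarrow> f g0) F"
  using assms(1) by induction (use assms(2) in \<open>auto intro: tendsto_add tendsto_mult\<close>)

text \<open>In the chart A, the coordinate u l of a point x l \<in> P^1 gives the homogeneous
  coordinates [chart_hom0 A l u : chart_hom1 A l u] of x l.\<close>
definition chart_hom0 :: "'a set \<Rightarrow> 'a \<Rightarrow> ('a \<Rightarrow> complex) \<Rightarrow> complex" where
  "chart_hom0 A l u = (if l \<in> A then 1 else u l)"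

definition chart_hom1 :: "'a set \<Rightarrow> 'a \<Rightarrow> ('a \<Rightarrow> complex) \<Rightarrow> complex" where
  "chart_hom1 A l u = (if l \<in> A then u l else 1)"

lemma chart_hom0_poly_fun: "chart_hom0 A l \<in> poly_fun"
  unfolding chart_hom0_def by (cases "l \<in> A") (simp_all add: pf_const pf_var)

lemma chart_hom1_poly_fun: "chart_hom1 A l \<in> poly_fun"
  unfolding chart_hom1_def by (cases "l \<in> A") (simp_all add: pf_const pf_var)

lemma chart_hom_None:
  assumes "x \<in> chart P A" "l \<in> P" "x l = None"
  shows "chart_hom0 A l (ccoord P A x) = 0" "chart_hom1 A l (ccoord P A x) = 1"
  using assms unfolding chart_def chart_hom0_def chart_hom1_def ccoord_def by auto

lemma chart_hom_Some:
  assumes "x \<in> chart P A" "l \<in> P" "x l = Some v"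
  shows "chart_hom0 A l (ccoord P A x) \<noteq> 0"
    "chart_hom1 A l (ccoord P A x) = v * chart_hom0 A l (ccoord P A x)"
  using assms unfolding chart_def chart_hom0_def chart_hom1_def ccoord_def by auto

lemma chart_hom0_eq_0_iff:
  assumes "x \<in> chart P A" "l \<in> P"
  shows "chart_hom0 A l (ccoord P A x) = 0 \<longleftrightarrow> x l = None"
  using chart_hom_None[OF assms] chart_hom_Some[OF assms] by (cases "x l") auto

lemma chart_subset_Pd: "chart P A \<subseteq> Pd P"
  unfolding chart_def by blast

lemma ccoord_in_aff_space: "ccoord P A x \<in> aff_space P"
  unfolding ccoord_def aff_space_def by auto

definition chart_point :: "(real^'n) set \<Rightarrow> (real^'n) set \<Rightarrow> (real^'n \<Rightarrow> complex) \<Rightarrow> (real^'n \<Rightarrow> complex option)" where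
  "chart_point P A u = (\<lambda>l. if l \<notin> P then None else if l \<in> A then Some (u l)
     else if u l = 0 then None else Some (inverse (u l)))"

lemma chart_point_in_chart: "chart_point P A u \<in> chart P A"
  unfolding chart_point_def chart_def Pd_def by auto

lemma ccoord_chart_point: "u \<in> aff_space P \<Longrightarrow> ccoord P A (chart_point P A u) = u"
  unfolding chart_point_def ccoord_def aff_space_def by (rule ext) auto

lemma chart_point_ccoord: "x \<in> chart P A \<Longrightarrow> chart_point P A (ccoord P A x) = x"
  unfolding chart_point_def ccoord_def chart_def Pd_def
  by (rule ext) (auto split: option.split)

lemma ccoord_image_eq_iff:
  "ccoord P A ` (Z \<inter> chart P A) = {v \<in> aff_space P. Q v}
     \<longleftrightarrow> (\<forall>x\<in>chart P A. x \<in> Z \<longleftrightarrow> Q (ccoord P A x))" (is "?img = ?zero \<longleftrightarrow> _")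
proof
  assume eq: "?img = ?zero"
  show "\<forall>x\<in>chart P A. x \<in> Z \<longleftrightarrow> Q (ccoord P A x)"
  proof (intro ballI iffI)
    fix x assume "x \<in> chart P A" "x \<in> Z"
    then show "Q (ccoord P A x)" using eq by blast
  next
    fix x assume x: "x \<in> chart P A" "Q (ccoord P A x)"
    then have "ccoord P A x \<in> ?img" using eq ccoord_in_aff_space by blast
    then obtain z where z: "z \<in> Z \<inter> chart P A" "ccoord P A x = ccoord P A z" by blast
    then have "x = z" using chart_point_ccoord[OF x(1)] chart_point_ccoord[of z] by simp
    then show "x \<in> Z" using z by blast
  qed
next
  assume iff: "\<forall>x\<in>chart P A. x \<in> Z \<longleftrightarrow> Q (ccoord P A x)"
  show "?img = ?zero"
  proof (intro subset_antisym subsetI)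
    fix v assume "v \<in> ?img" then show "v \<in> ?zero" using iff ccoord_in_aff_space by blast
  next
    fix v assume v: "v \<in> ?zero"
    then have "ccoord P A (chart_point P A v) = v" using ccoord_chart_point by blast
    moreover have "chart_point P A v \<in> Z \<inter> chart P A"
      using iff chart_point_in_chart v calculation by auto
    ultimately show "v \<in> ?img" by (metis image_eqI)
  qed
qed

lemma zclosed_iff_chart_equations:
  "zclosed P Z \<longleftrightarrow> Z \<subseteq> Pd P \<and>
     (\<forall>A\<subseteq>P. \<exists>F\<subseteq>poly_fun. \<forall>x\<in>chart P A. x \<in> Z \<longleftrightarrow> (\<forall>f\<in>F. f (ccoord P A x) = 0))"
  unfolding zclosed_def aff_closed_def ccoord_image_eq_iff ..

lemma zclosed_chart_equations:
  assumes "zclosed P Z" "A \<subseteq> P"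
  obtains F where "F \<subseteq> poly_fun" "\<forall>x\<in>chart P A. x \<in> Z \<longleftrightarrow> (\<forall>f\<in>F. f (ccoord P A x) = 0)"
  using assms unfolding zclosed_iff_chart_equations by blast

lemma zclosed_Int:
  assumes "zclosed P Z1" "zclosed P Z2"
  shows "zclosed P (Z1 \<inter> Z2)"
  unfolding zclosed_iff_chart_equations
proof (intro conjI allI impI)
  show "Z1 \<inter> Z2 \<subseteq> Pd P" using assms unfolding zclosed_def by blast
  fix A assume "A \<subseteq> P"
  obtain F1 where "F1 \<subseteq> poly_fun" "\<forall>x\<in>chart P A. x \<in> Z1 \<longleftrightarrow> (\<forall>f\<in>F1. f (ccoord P A x) = 0)"
    using zclosed_chart_equations[OF assms(1) \<open>A \<subseteq> P\<close>] .
  moreover obtain F2 where "F2 \<subseteq> poly_fun" "\<forall>x\<in>chart P A. x \<in> Z2 \<longleftrightarrow> (\<forall>f\<in>F2. f (ccoord P A x) = 0)"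
    using zclosed_chart_equations[OF assms(2) \<open>A \<subseteq> P\<close>] .
  ultimately have "F1 \<union> F2 \<subseteq> poly_fun"
    and "\<forall>x\<in>chart P A. x \<in> Z1 \<inter> Z2 \<longleftrightarrow> (\<forall>f\<in>F1 \<union> F2. f (ccoord P A x) = 0)"
    by blast+
  then show "\<exists>F\<subseteq>poly_fun. \<forall>x\<in>chart P A. x \<in> Z1 \<inter> Z2 \<longleftrightarrow> (\<forall>f\<in>F. f (ccoord P A x) = 0)"
    by blast
qed

text \<open>A union is cut out by the pairwise products of the equations.\<close>
lemma zclosed_Un:
  assumes "zclosed P Z1" "zclosed P Z2"
  shows "zclosed P (Z1 \<union> Z2)"
  unfolding zclosed_iff_chart_equations
proof (intro conjI allI impI)
  show "Z1 \<union> Z2 \<subseteq> Pd P" using assms unfolding zclosed_def by blast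
  fix A assume "A \<subseteq> P"
  obtain F1 where F1: "F1 \<subseteq> poly_fun" and Z1: "\<forall>x\<in>chart P A. x \<in> Z1 \<longleftrightarrow> (\<forall>f\<in>F1. f (ccoord P A x) = 0)"
    using zclosed_chart_equations[OF assms(1) \<open>A \<subseteq> P\<close>] .
  obtain F2 where F2: "F2 \<subseteq> poly_fun" and Z2: "\<forall>x\<in>chart P A. x \<in> Z2 \<longleftrightarrow> (\<forall>f\<in>F2. f (ccoord P A x) = 0)"
    using zclosed_chart_equations[OF assms(2) \<open>A \<subseteq> P\<close>] .
  define F where "F = (\<lambda>(f, g) v. f v * g v) ` (F1 \<times> F2)"
  have "F \<subseteq> poly_fun" unfolding F_def using F1 F2 by (auto intro: pf_mult)
  moreover have "\<forall>x\<in>chart P A. x \<in> Z1 \<union> Z2 \<longleftrightarrow> (\<forall>f\<in>F. f (ccoord P A x) = 0)"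
  proof
    fix x assume x: "x \<in> chart P A"
    have "(\<forall>f\<in>F. f (ccoord P A x) = 0)
        \<longleftrightarrow> (\<forall>f\<in>F1. \<forall>g\<in>F2. f (ccoord P A x) * g (ccoord P A x) = 0)"
      unfolding F_def by auto
    then show "x \<in> Z1 \<union> Z2 \<longleftrightarrow> (\<forall>f\<in>F. f (ccoord P A x) = 0)"
      unfolding Un_iff using Z1 Z2 x by auto
  qed
  ultimately show "\<exists>F\<subseteq>poly_fun. \<forall>x\<in>chart P A. x \<in> Z1 \<union> Z2 \<longleftrightarrow> (\<forall>f\<in>F. f (ccoord P A x) = 0)"
    by blast
qed

definition few_finite_coords :: "(real^'n) set \<Rightarrow> nat \<Rightarrow> (real^'n \<Rightarrow> complex option) set" where
  "few_finite_coords P c = {x \<in> Pd P. card {l\<in>P. x l \<noteq> None} < c}"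

definition infinite_outside :: "(real^'n) set \<Rightarrow> (real^'n) set \<Rightarrow> (real^'n \<Rightarrow> complex option) set" where
  "infinite_outside P T = {x \<in> Pd P. \<forall>l\<in>P - T. x l = None}"

lemma zclosed_infinite_outside: "zclosed P (infinite_outside P T)"
  unfolding zclosed_iff_chart_equations
proof (intro conjI allI impI)
  show "infinite_outside P T \<subseteq> Pd P" unfolding infinite_outside_def by blast
  fix A assume "A \<subseteq> P"
  have "\<forall>x\<in>chart P A. x \<in> infinite_outside P T
          \<longleftrightarrow> (\<forall>f\<in>chart_hom0 A ` (P - T). f (ccoord P A x) = 0)"
    unfolding infinite_outside_def using chart_subset_Pd chart_hom0_eq_0_iff by fastforce
  moreover have "chart_hom0 A ` (P - T) \<subseteq> poly_fun"
    by (simp add: image_subset_iff chart_hom0_poly_fun)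
  ultimately show "\<exists>F\<subseteq>poly_fun. \<forall>x\<in>chart P A.
      x \<in> infinite_outside P T \<longleftrightarrow> (\<forall>f\<in>F. f (ccoord P A x) = 0)" by blast
qed

lemma card_less_iff_no_subset_of_card:
  assumes "finite P" "F \<subseteq> P"
  shows "card F < c \<longleftrightarrow> (\<forall>D\<subseteq>P. card D = c \<longrightarrow> \<not> D \<subseteq> F)"
proof
  assume less: "card F < c"
  show "\<forall>D\<subseteq>P. card D = c \<longrightarrow> \<not> D \<subseteq> F"
  proof (intro allI impI notI)
    fix D assume "D \<subseteq> P" "card D = c" "D \<subseteq> F"
    then show False using card_mono[OF finite_subset[OF assms(2,1)] \<open>D \<subseteq> F\<close>] less by simp
  qed
next
  assume no_subset: "\<forall>D\<subseteq>P. card D = c \<longrightarrow> \<not> D \<subseteq> F"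
  show "card F < c"
  proof (rule ccontr)
    assume "\<not> card F < c"
    then obtain D where "D \<subseteq> F" "card D = c" using obtain_subset_with_card_n[of c F] by auto
    then show False using no_subset assms(2) by blast
  qed
qed

lemma prod_chart_hom0_eq_0_iff:
  assumes "x \<in> chart P A" "D \<subseteq> P" "finite D"
  shows "(\<Prod>l\<in>D. chart_hom0 A l (ccoord P A x)) = 0 \<longleftrightarrow> (\<exists>l\<in>D. x l = None)"
proof -
  have "(\<Prod>l\<in>D. chart_hom0 A l (ccoord P A x)) = 0
      \<longleftrightarrow> (\<exists>l\<in>D. chart_hom0 A l (ccoord P A x) = 0)" by (rule prod_zero_iff[OF assms(3)])
  also have "\<dots> \<longleftrightarrow> (\<exists>l\<in>D. x l = None)" using chart_hom0_eq_0_iff[OF assms(1)] assms(2) by blast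
  finally show ?thesis .
qed

text \<open>Having fewer than c finite coordinates means that every product of c denominators
  vanishes.\<close>
lemma zclosed_few_finite_coords:
  assumes "finite P"
  shows "zclosed P (few_finite_coords P c)"
  unfolding zclosed_iff_chart_equations
proof (intro conjI allI impI)
  show "few_finite_coords P c \<subseteq> Pd P" unfolding few_finite_coords_def by blast
  fix A assume "A \<subseteq> P"
  define F where "F = (\<lambda>D u. \<Prod>l\<in>D. chart_hom0 A l u) ` {D. D \<subseteq> P \<and> card D = c}"
  have "(\<lambda>u. \<Prod>l\<in>D. chart_hom0 A l u) \<in> poly_fun" if "D \<subseteq> P" for D
    using poly_fun_prod[OF finite_subset[OF that assms] chart_hom0_poly_fun] .
  then have "F \<subseteq> poly_fun" unfolding F_def image_subset_iff by simp
  moreover have "x \<in> few_finite_coords P c \<longleftrightarrow> (\<forall>f\<in>F. f (ccoord P A x) = 0)"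
    if x: "x \<in> chart P A" for x
  proof -
    have prod_eq_0: "(\<Prod>l\<in>D. chart_hom0 A l (ccoord P A x)) = 0 \<longleftrightarrow> \<not> D \<subseteq> {l\<in>P. x l \<noteq> None}"
      if "D \<subseteq> P" for D
    proof -
      have "(\<exists>l\<in>D. x l = None) \<longleftrightarrow> \<not> D \<subseteq> {l\<in>P. x l \<noteq> None}" using that by auto
      then show ?thesis using prod_chart_hom0_eq_0_iff[OF x that finite_subset[OF that assms]] by simp
    qed
    have "x \<in> few_finite_coords P c \<longleftrightarrow> card {l\<in>P. x l \<noteq> None} < c"
      using chart_subset_Pd x unfolding few_finite_coords_def by blast
    also have "\<dots> \<longleftrightarrow> (\<forall>D\<subseteq>P. card D = c \<longrightarrow> \<not> D \<subseteq> {l\<in>P. x l \<noteq> None})"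
      by (rule card_less_iff_no_subset_of_card[OF assms]) blast
    also have "\<dots> \<longleftrightarrow> (\<forall>f\<in>F. f (ccoord P A x) = 0)"
      unfolding F_def by (auto simp: prod_eq_0)
    finally show ?thesis .
  qed
  ultimately show "\<exists>F\<subseteq>poly_fun. \<forall>x\<in>chart P A.
      x \<in> few_finite_coords P c \<longleftrightarrow> (\<forall>f\<in>F. f (ccoord P A x) = 0)" by blast
qed

lemma sum_prod_others_nonzero:
  fixes w z :: "'a \<Rightarrow> 'b::field"
  assumes "finite D" "\<forall>l\<in>D. w l \<noteq> 0"
  shows "(\<Sum>l\<in>D. c l * z l * (\<Prod>m\<in>D - {l}. w m)) = (\<Sum>l\<in>D. c l * (z l / w l)) * (\<Prod>m\<in>D. w m)"
  unfolding sum_distrib_right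
proof (rule sum.cong[OF refl])
  fix l assume "l \<in> D"
  then have "(\<Prod>m\<in>D. w m) = w l * (\<Prod>m\<in>D - {l}. w m)" using prod.remove[OF assms(1)] by blast
  then show "c l * z l * (\<Prod>m\<in>D - {l}. w m) = c l * (z l / w l) * (\<Prod>m\<in>D. w m)"
    using assms(2) \<open>l \<in> D\<close> by simp
qed

lemma sum_prod_others_zero:
  fixes w z :: "'a \<Rightarrow> 'b::field"
  assumes "finite D" "k \<in> D" "w k = 0"
  shows "(\<Sum>l\<in>D. c l * z l * (\<Prod>m\<in>D - {l}. w m)) = c k * z k * (\<Prod>m\<in>D - {k}. w m)"
proof -
  have "(\<Prod>m\<in>D - {l}. w m) = 0" if "l \<in> D - {k}" for l
    using that assms by (auto simp: prod_zero_iff)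
  then have "(\<Sum>l\<in>D - {k}. c l * z l * (\<Prod>m\<in>D - {l}. w m)) = 0"
    by (intro sum.neutral) simp
  then show ?thesis using sum.remove[OF assms(1,2), of "\<lambda>l. c l * z l * (\<Prod>m\<in>D - {l}. w m)"] by simp
qed

lemma sum_prod_others_eq_0_iff:
  fixes w z :: "'a \<Rightarrow> 'b::field"
  assumes "finite D" "\<And>l. l \<in> D \<Longrightarrow> c l \<noteq> 0" "\<And>l. l \<in> D \<Longrightarrow> w l = 0 \<Longrightarrow> z l \<noteq> 0"
  shows "(\<Sum>l\<in>D. c l * z l * (\<Prod>m\<in>D - {l}. w m)) = 0 \<longleftrightarrow>
    ({l\<in>D. w l = 0} = {} \<longrightarrow> (\<Sum>l\<in>D. c l * (z l / w l)) = 0) \<and> (\<forall>k. {l\<in>D. w l = 0} \<noteq> {k})"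
proof -
  consider (none) "{l\<in>D. w l = 0} = {}" | (one) k where "{l\<in>D. w l = 0} = {k}"
    | (two) k k' where "k \<in> D" "w k = 0" "k' \<in> D" "w k' = 0" "k \<noteq> k'" by blast
  then show ?thesis
  proof cases
    case none
    then have "(\<Prod>m\<in>D. w m) \<noteq> 0" using assms(1) by (auto simp: prod_zero_iff)
    then show ?thesis using none sum_prod_others_nonzero[OF assms(1), of w c z] by auto
  next
    case one
    then have "k \<in> D" "w k = 0" "\<forall>m\<in>D - {k}. w m \<noteq> 0" by auto
    then have "(\<Prod>m\<in>D - {k}. w m) \<noteq> 0" using assms(1) by (auto simp: prod_zero_iff)
    then show ?thesis using one assms(2,3) \<open>k \<in> D\<close> \<open>w k = 0\<close>
      sum_prod_others_zero[where w = w and c = c and z = z, OF assms(1) \<open>k \<in> D\<close> \<open>w k = 0\<close>] by auto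
  next
    case two
    then have "(\<Prod>m\<in>D - {k}. w m) = 0" using assms(1) by (auto simp: prod_zero_iff)
    then have "(\<Sum>l\<in>D. c l * z l * (\<Prod>m\<in>D - {l}. w m)) = 0"
      using sum_prod_others_zero[where w = w and c = c and z = z, OF assms(1) two(1,2)] by simp
    moreover have "{l\<in>D. w l = 0} \<noteq> {}" "\<forall>m. {l\<in>D. w l = 0} \<noteq> {m}"
      using two by (blast, metis (mono_tags, lifting) mem_Collect_eq singletonD)
    ultimately show ?thesis by (simp only: simp_thms)
  qed
qed

text \<open>A linear relation \<Sum> c(\<lambda>) \<lambda> = 0 among positive roots forces \<Sum> c(\<lambda>) x(\<lambda>) = 0 on h.
  On the closure this becomes: \<Sum> c(\<lambda>) x(\<lambda>) = 0 when all coordinates in the support are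
  finite, and the support never contains exactly one infinite coordinate.\<close>
definition relation_respected :: "(real^'n) set \<Rightarrow> (real^'n \<Rightarrow> real) \<Rightarrow> (real^'n \<Rightarrow> complex option) \<Rightarrow> bool" where
  "relation_respected P c x \<longleftrightarrow>
    ({l\<in>P. c l \<noteq> 0} \<inter> {l\<in>P. x l = None} = {} \<longrightarrow>
        (\<Sum>l\<in>{l\<in>P. c l \<noteq> 0}. complex_of_real (c l) * the (x l)) = 0) \<and>
    (\<forall>m. {l\<in>P. c l \<noteq> 0} \<inter> {l\<in>P. x l = None} \<noteq> {m})"

definition relation_locus :: "(real^'n) set \<Rightarrow> (real^'n \<Rightarrow> complex option) set" where
  "relation_locus P = {x \<in> Pd P. \<forall>c. (\<Sum>l\<in>P. c l *\<^sub>R l) = 0 \<longrightarrow> relation_respected P c x}"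

text \<open>The equation \<Sum> c(\<lambda>) x(\<lambda>) = 0 with all denominators cleared.\<close>
definition relation_poly :: "(real^'n) set \<Rightarrow> (real^'n) set \<Rightarrow> (real^'n \<Rightarrow> real) \<Rightarrow> (real^'n \<Rightarrow> complex) \<Rightarrow> complex" where
  "relation_poly P A c u = (\<Sum>l\<in>{l\<in>P. c l \<noteq> 0}. complex_of_real (c l) * chart_hom1 A l u *
                    (\<Prod>m\<in>{l\<in>P. c l \<noteq> 0} - {l}. chart_hom0 A m u))"

lemma relation_poly_poly_fun:
  assumes "finite P"
  shows "relation_poly P A c \<in> poly_fun"
  unfolding relation_poly_def[abs_def]
  using assms by (intro poly_fun_sum pf_mult pf_const chart_hom1_poly_fun poly_fun_prod chart_hom0_poly_fun) auto

lemma relation_poly_eq_0_iff: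
  assumes "finite P" and x: "x \<in> chart P A"
  shows "relation_poly P A c (ccoord P A x) = 0 \<longleftrightarrow> relation_respected P c x"
proof -
  define D where "D = {l\<in>P. c l \<noteq> 0}"
  define N where "N = {l\<in>P. x l = None}"
  define w where "w l = chart_hom0 A l (ccoord P A x)" for l
  define z where "z l = chart_hom1 A l (ccoord P A x)" for l
  have "finite D" "D \<subseteq> P" unfolding D_def using assms(1) by auto
  have zeros: "{l\<in>D. w l = 0} = D \<inter> N"
    using chart_hom0_eq_0_iff[OF x] \<open>D \<subseteq> P\<close> unfolding w_def N_def by blast
  have "z l \<noteq> 0" if "l \<in> D" "w l = 0" for l
  proof -
    have "l \<in> P" "x l = None" using that zeros unfolding N_def by auto
    then show ?thesis using chart_hom_None[OF x] unfolding z_def by simp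
  qed
  then have "(\<Sum>l\<in>D. complex_of_real (c l) * z l * (\<Prod>m\<in>D - {l}. w m)) = 0 \<longleftrightarrow>
      (D \<inter> N = {} \<longrightarrow> (\<Sum>l\<in>D. complex_of_real (c l) * (z l / w l)) = 0) \<and> (\<forall>m. D \<inter> N \<noteq> {m})"
    unfolding zeros[symmetric] by (intro sum_prod_others_eq_0_iff \<open>finite D\<close>) (auto simp: D_def)
  moreover have "(\<Sum>l\<in>D. complex_of_real (c l) * (z l / w l)) = (\<Sum>l\<in>D. complex_of_real (c l) * the (x l))"
    if disjoint: "D \<inter> N = {}"
  proof (rule sum.cong[OF refl])
    fix l assume "l \<in> D"
    then obtain v where "l \<in> P" "x l = Some v" using disjoint \<open>D \<subseteq> P\<close> unfolding N_def
      by (cases "x l") auto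
    then show "complex_of_real (c l) * (z l / w l) = complex_of_real (c l) * the (x l)"
      using chart_hom_Some[OF x] unfolding w_def z_def by simp
  qed
  moreover have "relation_poly P A c (ccoord P A x)
      = (\<Sum>l\<in>D. complex_of_real (c l) * z l * (\<Prod>m\<in>D - {l}. w m))"
    unfolding relation_poly_def D_def w_def z_def ..
  ultimately have "relation_poly P A c (ccoord P A x) = 0 \<longleftrightarrow>
      (D \<inter> N = {} \<longrightarrow> (\<Sum>l\<in>D. complex_of_real (c l) * the (x l)) = 0) \<and> (\<forall>m. D \<inter> N \<noteq> {m})"
    by auto
  then show ?thesis unfolding relation_respected_def D_def N_def .
qed

lemma zclosed_relation_locus:
  assumes "finite P"
  shows "zclosed P (relation_locus P)"
  unfolding zclosed_iff_chart_equations
proof (intro conjI allI impI)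
  show "relation_locus P \<subseteq> Pd P" unfolding relation_locus_def by blast
  fix A assume "A \<subseteq> P"
  define F where "F = relation_poly P A ` {c. (\<Sum>l\<in>P. c l *\<^sub>R l) = 0}"
  have "F \<subseteq> poly_fun" unfolding F_def using relation_poly_poly_fun[OF assms] by blast
  moreover have "\<forall>x\<in>chart P A. x \<in> relation_locus P \<longleftrightarrow> (\<forall>f\<in>F. f (ccoord P A x) = 0)"
    unfolding F_def relation_locus_def
    using chart_subset_Pd relation_poly_eq_0_iff[OF assms] by auto
  ultimately show "\<exists>F\<subseteq>poly_fun. \<forall>x\<in>chart P A.
      x \<in> relation_locus P \<longleftrightarrow> (\<forall>f\<in>F. f (ccoord P A x) = 0)" by blast
qed

lemma positive_system_subset: "positive_system R P \<Longrightarrow> P \<subseteq> R"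
  unfolding positive_system_def by auto

lemma positive_system_finite: "root_system R \<Longrightarrow> positive_system R P \<Longrightarrow> finite P"
  using positive_system_subset unfolding root_system_def by (meson finite_subset)

lemma positive_system_cases:
  "root_system R \<Longrightarrow> positive_system R P \<Longrightarrow> a \<in> R \<Longrightarrow> a \<in> P \<or> - a \<in> P"
  unfolding positive_system_def using root_system_neg[of R a] by (auto simp: inner_minus_right)

lemma root_flat_positive_part_eq:
  assumes R: "root_system R" and P: "positive_system R P"
    and S1: "root_flat R S1" and S2: "root_flat R S2" and eq: "P \<inter> S1 = P \<inter> S2"
  shows "S1 = S2"
proof -
  have "a \<in> S2" if "a \<in> S1" "root_flat R S1" "root_flat R S2" "P \<inter> S1 = P \<inter> S2" for a S1 S2
  proof (cases "a \<in> P")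
    case False
    moreover have "a \<in> R" using that unfolding root_flat_def by blast
    ultimately have "- a \<in> P \<inter> S1" using positive_system_cases[OF R P] root_flat_neg[OF R] that by blast
    then show ?thesis using root_flat_neg[OF R that(3), of "- a"] that(4) by simp
  qed (use that in blast)
  then show ?thesis using S1 S2 eq by blast
qed

lemma span_positive_part:
  assumes R: "root_system R" and P: "positive_system R P" and S: "root_flat R S"
  shows "span (P \<inter> S) = span S"
proof -
  have "a \<in> span (P \<inter> S)" if "a \<in> S" for a
  proof (cases "a \<in> P")
    case False
    moreover have "a \<in> R" using that S unfolding root_flat_def by blast
    ultimately have "- a \<in> P \<inter> S" using positive_system_cases[OF R P] root_flat_neg[OF R S] that by blast
    then show ?thesis using span_neg[OF span_base, of "- a"] by simp
  next
    case True
    then show ?thesis using that span_base[of a "P \<inter> S"] by blast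
  qed
  moreover have "P \<inter> S \<subseteq> span S" using span_superset[of S] by blast
  ultimately show ?thesis unfolding span_eq by blast
qed

definition cell_point :: "(real^'n) set \<Rightarrow> (real^'n) set \<Rightarrow> complex^'n \<Rightarrow> (real^'n \<Rightarrow> complex option)" where
  "cell_point P S h = (\<lambda>l. if l \<in> P \<inter> S then Some (pairing l h) else None)"

lemma Cring_eq_range: "Cring P S = range (cell_point P S)"
proof (intro subset_antisym subsetI)
  fix x assume x: "x \<in> Cring P S"
  then obtain h where "\<forall>l\<in>P \<inter> S. x l = Some (pairing l h)" unfolding Cring_def by blast
  then have "x = cell_point P S h" using x unfolding Cring_def Pd_def cell_point_def by (intro ext) auto
  then show "x \<in> range (cell_point P S)" by blast
qed (auto simp: Cring_def Pd_def cell_point_def)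

lemma Cring_finite_coords:
  assumes "x \<in> Cring P S"
  shows "{l\<in>P. x l \<noteq> None} = P \<inter> S"
  using assms unfolding Cring_eq_range cell_point_def by (auto split: if_splits)

lemma Cring_subset_Pd: "Cring P S \<subseteq> Pd P"
  unfolding Cring_def by blast

lemma Cring_mem_few_finite_coords_iff:
  assumes "x \<in> Cring P S"
  shows "x \<in> few_finite_coords P c \<longleftrightarrow> card (P \<inter> S) < c"
proof -
  have "x \<in> Pd P" using assms Cring_subset_Pd by blast
  then show ?thesis unfolding few_finite_coords_def using Cring_finite_coords[OF assms] by simp
qed

lemma Cring_mem_infinite_outside_iff:
  assumes "x \<in> Cring P S"
  shows "x \<in> infinite_outside P T \<longleftrightarrow> P \<inter> S \<subseteq> T"
proof -
  have "x \<in> Pd P" using assms Cring_subset_Pd by blast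
  moreover have "(\<forall>l\<in>P - T. x l = None) \<longleftrightarrow> {l\<in>P. x l \<noteq> None} \<subseteq> T"
  proof
    assume none: "\<forall>l\<in>P - T. x l = None"
    show "{l\<in>P. x l \<noteq> None} \<subseteq> T"
    proof
      fix l assume "l \<in> {l\<in>P. x l \<noteq> None}"
      then show "l \<in> T" using none by (cases "l \<in> T") auto
    qed
  qed blast
  ultimately show ?thesis unfolding infinite_outside_def using Cring_finite_coords[OF assms] by simp
qed

lemma sum_over_support:
  "finite P \<Longrightarrow> (\<Sum>l\<in>{l\<in>P. c l \<noteq> 0}. complex_of_real (c l) * g l) = (\<Sum>l\<in>P. complex_of_real (c l) * g l)"
  by (rule sum.mono_neutral_left) auto

lemma in_span_of_relation_support:
  fixes P :: "'a::real_vector set"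
  assumes "finite P" "(\<Sum>l\<in>P. c l *\<^sub>R l) = 0" "m \<in> P" "c m \<noteq> 0"
  shows "m \<in> span {l\<in>P - {m}. c l \<noteq> 0}"
proof -
  have "(\<Sum>l\<in>P - {m}. c l *\<^sub>R l) \<in> span {l\<in>P - {m}. c l \<noteq> 0}"
  proof (intro span_sum)
    fix l assume l: "l \<in> P - {m}"
    show "c l *\<^sub>R l \<in> span {l\<in>P - {m}. c l \<noteq> 0}"
    proof (cases "c l = 0")
      case False
      then show ?thesis using l by (intro span_scale span_base) simp
    qed (simp add: span_zero)
  qed
  then have "- (\<Sum>l\<in>P - {m}. c l *\<^sub>R l) \<in> span {l\<in>P - {m}. c l \<noteq> 0}" by (rule span_neg)
  moreover have "c m *\<^sub>R m + (\<Sum>l\<in>P - {m}. c l *\<^sub>R l) = 0"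
    using assms(2) sum.remove[OF assms(1,3), of "\<lambda>l. c l *\<^sub>R l"] by simp
  then have "- (\<Sum>l\<in>P - {m}. c l *\<^sub>R l) = c m *\<^sub>R m" by (simp add: add_eq_0_iff)
  ultimately have "c m *\<^sub>R m \<in> span {l\<in>P - {m}. c l \<noteq> 0}" by simp
  then have "(1 / c m) *\<^sub>R (c m *\<^sub>R m) \<in> span {l\<in>P - {m}. c l \<noteq> 0}" by (rule span_scale)
  then show ?thesis using assms(4) by simp
qed

lemma Cring_subset_relation_locus:
  assumes R: "root_system R" and P: "positive_system R P" and S: "root_flat R S"
  shows "Cring P S \<subseteq> relation_locus P"
proof
  fix x assume x: "x \<in> Cring P S"
  have "finite P" using positive_system_finite[OF R P] .
  obtain h where h: "\<forall>l\<in>P \<inter> S. x l = Some (pairing l h)" using x unfolding Cring_def by blast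
  have N: "{l\<in>P. x l = None} = P - S" using Cring_finite_coords[OF x] by blast
  have "relation_respected P c x" if c: "(\<Sum>l\<in>P. c l *\<^sub>R l) = 0" for c
    unfolding relation_respected_def N
  proof (intro conjI impI allI notI)
    assume "{l\<in>P. c l \<noteq> 0} \<inter> (P - S) = {}"
    then have "(\<Sum>l\<in>{l\<in>P. c l \<noteq> 0}. complex_of_real (c l) * the (x l))
        = (\<Sum>l\<in>{l\<in>P. c l \<noteq> 0}. complex_of_real (c l) * pairing l h)"
      using h by (intro sum.cong) auto
    also have "\<dots> = pairing (\<Sum>l\<in>P. c l *\<^sub>R l) h"
      using sum_over_support[OF \<open>finite P\<close>] by (simp add: pairing_sum_left pairing_scaleR_left)
    finally show "(\<Sum>l\<in>{l\<in>P. c l \<noteq> 0}. complex_of_real (c l) * the (x l)) = 0"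
      using c by (simp add: pairing_def)
  next
    fix m assume m: "{l\<in>P. c l \<noteq> 0} \<inter> (P - S) = {m}"
    then have "m \<in> span {l\<in>P - {m}. c l \<noteq> 0}"
      using in_span_of_relation_support[OF \<open>finite P\<close> c] by blast
    moreover have "{l\<in>P - {m}. c l \<noteq> 0} \<subseteq> S" using m by blast
    ultimately have "m \<in> R \<inter> span S"
      using m positive_system_subset[OF P] span_mono by blast
    then show False using S m unfolding root_flat_def by blast
  qed
  then show "x \<in> relation_locus P" using x unfolding relation_locus_def Cring_def by blast
qed

text \<open>The coefficients of the linear relation l = \<Sum>b\<in>B. a(b) b.\<close>
definition relation_coeffs :: "'a set \<Rightarrow> ('a \<Rightarrow> real) \<Rightarrow> 'a \<Rightarrow> 'a \<Rightarrow> real" where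
  "relation_coeffs B a l k = (if k \<in> B then a k else 0) - (if k = l then 1 else 0)"

lemma sum_relation_coeffs:
  fixes f :: "'a \<Rightarrow> 'b::real_vector"
  assumes "finite P" "B \<subseteq> P" "l \<in> P"
  shows "(\<Sum>k\<in>P. relation_coeffs B a l k *\<^sub>R f k) = (\<Sum>k\<in>B. a k *\<^sub>R f k) - f l"
proof -
  have "(\<Sum>k\<in>P. relation_coeffs B a l k *\<^sub>R f k)
      = (\<Sum>k\<in>P. if k \<in> B then a k *\<^sub>R f k else 0) - (\<Sum>k\<in>P. if k = l then f k else 0)"
    unfolding relation_coeffs_def sum_subtractf[symmetric] by (rule sum.cong) (auto simp: scaleR_diff_left)
  also have "(\<Sum>k\<in>P. if k \<in> B then a k *\<^sub>R f k else 0) = (\<Sum>k\<in>B. a k *\<^sub>R f k)"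
    using sum.inter_restrict[OF assms(1), of "\<lambda>k. a k *\<^sub>R f k" B] assms(2) by (simp add: Int_absorb1)
  finally show ?thesis using assms(1,3) by simp
qed

text \<open>The support of the relation l = \<Sum>b\<in>B. a(b) b meets the infinite coordinates at
  most in l, so the relation conditions force x(l) to be finite and equal to \<Sum>b\<in>B. a(b) x(b).\<close>
lemma relation_locus_span_coord:
  assumes x: "x \<in> relation_locus P" and "finite P" and B: "B \<subseteq> {l\<in>P. x l \<noteq> None}"
    and l: "l \<in> P" "l \<notin> B" "l = (\<Sum>b\<in>B. a b *\<^sub>R b)"
  shows "x l \<noteq> None" "the (x l) = (\<Sum>b\<in>B. a b *\<^sub>R the (x b))"
proof -
  define c where "c = relation_coeffs B a l"
  have "B \<subseteq> P" using B by blast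
  have "(\<Sum>k\<in>P. c k *\<^sub>R k) = 0"
    unfolding c_def sum_relation_coeffs[OF \<open>finite P\<close> \<open>B \<subseteq> P\<close> l(1)] using l(3) by simp
  then have resp: "relation_respected P c x" using x unfolding relation_locus_def by blast
  have support: "{k\<in>P. c k \<noteq> 0} \<inter> {k\<in>P. x k = None} = (if x l = None then {l} else {})"
    using B l(1,2) unfolding c_def relation_coeffs_def by auto
  then show "x l \<noteq> None" using resp unfolding relation_respected_def by (metis (lifting))
  then have "(\<Sum>k\<in>{k\<in>P. c k \<noteq> 0}. complex_of_real (c k) * the (x k)) = 0"
    using resp support unfolding relation_respected_def by simp
  then have "(\<Sum>k\<in>P. c k *\<^sub>R the (x k)) = 0"
    unfolding sum_over_support[OF \<open>finite P\<close>] by (simp add: scaleR_conv_of_real)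
  then show "the (x l) = (\<Sum>b\<in>B. a b *\<^sub>R the (x b))"
    unfolding c_def sum_relation_coeffs[OF \<open>finite P\<close> \<open>B \<subseteq> P\<close> l(1)] by simp
qed

lemma in_span_finite_sum:
  assumes "finite B" "l \<in> span B"
  obtains a where "l = (\<Sum>b\<in>B. a b *\<^sub>R b)"
proof -
  have "l \<in> range (\<lambda>a. \<Sum>b\<in>B. a b *\<^sub>R b)" using assms(2) unfolding span_finite[OF assms(1)] .
  then show ?thesis using that by blast
qed

lemma relation_locus_span_finite_coords:
  assumes x: "x \<in> relation_locus P" and "finite P" "l \<in> P" "l \<in> span {l\<in>P. x l \<noteq> None}"
  shows "x l \<noteq> None"
proof (rule ccontr)
  assume "\<not> x l \<noteq> None"
  then have "l \<notin> {l\<in>P. x l \<noteq> None}" by simp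
  moreover obtain a where "l = (\<Sum>b\<in>{l\<in>P. x l \<noteq> None}. a b *\<^sub>R b)"
    using in_span_finite_sum[OF _ assms(4)] \<open>finite P\<close> by auto
  ultimately have "x l \<noteq> None"
    using relation_locus_span_coord(1)[OF x \<open>finite P\<close> order_refl \<open>l \<in> P\<close>] by blast
  with \<open>\<not> x l \<noteq> None\<close> show False ..
qed

lemma relation_locus_finite_coords_pairing:
  assumes x: "x \<in> relation_locus P" and "finite P"
  obtains h where "\<forall>l\<in>P. x l \<noteq> None \<longrightarrow> x l = Some (pairing l h)"
proof -
  define F where "F = {l\<in>P. x l \<noteq> None}"
  obtain B where B: "B \<subseteq> F" "independent B" "F \<subseteq> span B" "card B = dim F"
    by (rule basis_exists)
  have "finite B" using finite_subset[OF B(1)] \<open>finite P\<close> unfolding F_def by simp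
  obtain h where h: "\<forall>b\<in>B. pairing b h = the (x b)"
    using exists_pairing_eq_on_independent[OF B(2), of "\<lambda>b. the (x b)"] by blast
  have val: "the (x l) = pairing l h" if l: "l \<in> F" for l
  proof (cases "l \<in> B")
    case False
    obtain a where a: "l = (\<Sum>b\<in>B. a b *\<^sub>R b)" using in_span_finite_sum[OF \<open>finite B\<close>] B(3) l by blast
    have "l \<in> P" using l unfolding F_def by simp
    have "the (x l) = (\<Sum>b\<in>B. a b *\<^sub>R the (x b))"
      using relation_locus_span_coord(2)[OF x \<open>finite P\<close> _ \<open>l \<in> P\<close> False a] B(1) unfolding F_def .
    also have "\<dots> = (\<Sum>b\<in>B. complex_of_real (a b) * pairing b h)"
      using h by (simp add: scaleR_conv_of_real)
    also have "\<dots> = pairing l h" unfolding a by (simp add: pairing_sum_left pairing_scaleR_left)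
    finally show ?thesis .
  qed (use h in simp)
  have "x l = Some (pairing l h)" if "l \<in> P" "x l \<noteq> None" for l
    using that val[of l] unfolding F_def by (cases "x l") auto
  then show ?thesis using that by blast
qed

lemma relation_locus_subset_Cring:
  assumes R: "root_system R" and P: "positive_system R P" and x: "x \<in> relation_locus P"
  shows "\<exists>S. root_flat R S \<and> x \<in> Cring P S"
proof -
  have "finite P" using positive_system_finite[OF R P] .
  define F where "F = {l\<in>P. x l \<noteq> None}"
  have "F \<subseteq> P" unfolding F_def by blast
  have "P \<inter> (R \<inter> span F) \<subseteq> F"
  proof
    fix l assume "l \<in> P \<inter> (R \<inter> span F)"
    then show "l \<in> F" using relation_locus_span_finite_coords[OF x \<open>finite P\<close>] unfolding F_def by simp
  qed
  moreover have "F \<subseteq> P \<inter> (R \<inter> span F)"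
    using \<open>F \<subseteq> P\<close> span_superset[of F] positive_system_subset[OF P] by blast
  ultimately have PS: "P \<inter> (R \<inter> span F) = F" by blast
  obtain h where "\<forall>l\<in>P. x l \<noteq> None \<longrightarrow> x l = Some (pairing l h)"
    using relation_locus_finite_coords_pairing[OF x \<open>finite P\<close>] .
  then have "\<forall>l\<in>F. x l = Some (pairing l h)" "\<forall>l\<in>P - F. x l = None"
    unfolding F_def by auto
  moreover have "P - R \<inter> span F = P - F" using PS by blast
  ultimately have "\<forall>l\<in>P \<inter> (R \<inter> span F). x l = Some (pairing l h)"
    and "\<forall>l\<in>P - R \<inter> span F. x l = None"
    unfolding PS by simp_all
  moreover have "x \<in> Pd P" using x unfolding relation_locus_def by blast
  ultimately have "x \<in> Cring P (R \<inter> span F)" unfolding Cring_def by blast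
  then show ?thesis using root_flat_Int_span by blast
qed

lemma subspace_avoid_hyperplanes:
  fixes W :: "'a::real_inner set"
  assumes "finite V" "subspace W" "\<forall>v\<in>V. v \<noteq> 0 \<and> v \<in> W"
  shows "\<exists>y\<in>W. \<forall>v\<in>V. y \<bullet> v \<noteq> 0"
  using assms(1,3)
proof (induction V rule: finite_induct)
  case empty then show ?case using subspace_0[OF assms(2)] by blast
next
  case (insert v V)
  then obtain y0 where y0: "y0 \<in> W" "\<forall>u\<in>V. y0 \<bullet> u \<noteq> 0" by auto
  have v: "v \<in> W" "v \<noteq> 0" using insert by auto
  show ?case
  proof (cases "y0 \<bullet> v = 0")
    case True
    text \<open>Move y0 along v by a scalar e avoiding the finitely many bad values.\<close>
    define bad where "bad = insert 0 ((\<lambda>u. - (y0 \<bullet> u) / (v \<bullet> u)) ` V)"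
    have "finite bad" unfolding bad_def using insert by simp
    then obtain e :: real where e: "e \<notin> bad" using ex_new_if_finite[OF infinite_UNIV_char_0] by blast
    define y where "y = y0 + e *\<^sub>R v"
    have "y \<in> W" unfolding y_def using y0(1) v(1) assms(2) by (simp add: subspace_add subspace_scale)
    moreover have "y \<bullet> v \<noteq> 0"
      using True e v(2) unfolding y_def bad_def by (simp add: inner_add_left)
    moreover have "y \<bullet> u \<noteq> 0" if u: "u \<in> V" for u
    proof
      assume "y \<bullet> u = 0"
      then have "y0 \<bullet> u + e * (v \<bullet> u) = 0" unfolding y_def by (simp add: inner_add_left)
      show False
      proof (cases "v \<bullet> u = 0")
        case False
        then have "e = - (y0 \<bullet> u) / (v \<bullet> u)" using \<open>y0 \<bullet> u + e * (v \<bullet> u) = 0\<close> by (simp add: field_simps)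
        then show False using e u unfolding bad_def by auto
      qed (use \<open>y0 \<bullet> u + e * (v \<bullet> u) = 0\<close> y0(2) u in simp)
    qed
    ultimately show ?thesis by blast
  qed (use y0 in blast)
qed

lemma exists_orthogonal_avoiding:
  fixes S :: "(real^'n) set"
  assumes "finite V" and V: "\<forall>l\<in>V. l \<notin> span S"
  shows "\<exists>y. (\<forall>s\<in>S. s \<bullet> y = 0) \<and> (\<forall>l\<in>V. l \<bullet> y \<noteq> 0)"
proof -
  define W where "W = {w. \<forall>s\<in>S. s \<bullet> w = 0}"
  have "subspace W" unfolding W_def subspace_def by (simp add: inner_add_right)
  have orth: "a \<bullet> y = 0" if "a \<in> span S" "y \<in> W" for a y
  proof -
    have "subspace {a. a \<bullet> y = 0}" unfolding subspace_def by (simp add: inner_add_left)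
    moreover have "S \<subseteq> {a. a \<bullet> y = 0}" using that(2) unfolding W_def by auto
    ultimately show ?thesis using span_minimal that(1) by blast
  qed
  text \<open>On W each l \<in> V acts like its nonzero component orthogonal to span S.\<close>
  have "\<exists>z. z \<noteq> 0 \<and> z \<in> W \<and> (\<forall>y\<in>W. l \<bullet> y = z \<bullet> y)" if l: "l \<in> V" for l
  proof -
    obtain a z where az: "a \<in> span S" "\<And>w. w \<in> span S \<Longrightarrow> orthogonal z w" "l = a + z"
      using orthogonal_subspace_decomp_exists[of S l] by metis
    have "z \<in> W" unfolding W_def using az(2) span_base by (auto simp: orthogonal_def inner_commute)
    moreover have "z \<noteq> 0" using az V l by auto
    moreover have "\<forall>y\<in>W. l \<bullet> y = z \<bullet> y" using orth az(1,3) by (simp add: inner_add_left)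
    ultimately show ?thesis by blast
  qed
  then obtain zf where zf: "\<forall>l\<in>V. zf l \<noteq> 0 \<and> zf l \<in> W \<and> (\<forall>y\<in>W. l \<bullet> y = zf l \<bullet> y)"
    by metis
  obtain y where y: "y \<in> W" "\<forall>v\<in>zf ` V. y \<bullet> v \<noteq> 0"
    using subspace_avoid_hyperplanes[of "zf ` V" W] \<open>finite V\<close> \<open>subspace W\<close> zf by auto
  then have "\<forall>l\<in>V. l \<bullet> y \<noteq> 0" using zf by (auto simp: inner_commute)
  then show ?thesis using y(1) unfolding W_def by blast
qed

lemma zclosed_chart_limit:
  assumes Z: "zclosed P Z" and "A \<subseteq> P" "x \<in> chart P A" "F \<noteq> bot"
    and lim: "\<And>l. ((\<lambda>s. g s l) \<longlongrightarrow> ccoord P A x l) F"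
    and ev: "eventually (\<lambda>s. \<exists>z\<in>Z \<inter> chart P A. ccoord P A z = g s) F"
  shows "x \<in> Z"
proof -
  obtain E where E: "E \<subseteq> poly_fun" "\<forall>x\<in>chart P A. x \<in> Z \<longleftrightarrow> (\<forall>f\<in>E. f (ccoord P A x) = 0)"
    using zclosed_chart_equations[OF Z \<open>A \<subseteq> P\<close>] .
  have "f (ccoord P A x) = 0" if "f \<in> E" for f
  proof (rule tendsto_unique[OF \<open>F \<noteq> bot\<close>])
    show "((\<lambda>s. f (g s)) \<longlongrightarrow> f (ccoord P A x)) F"
      using poly_fun_tendsto[of f g] E(1) that lim by blast
    have "eventually (\<lambda>s. f (g s) = 0) F"
      using ev by (rule eventually_mono) (use E(2) that in force)
    then show "((\<lambda>s. f (g s)) \<longlongrightarrow> 0) F" by (rule tendsto_eventually)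
  qed
  then show ?thesis using E(2) \<open>x \<in> chart P A\<close> by blast
qed

lemma ccoord_emb_translate:
  fixes y :: "real^'n"
  assumes "A \<subseteq> P" "\<forall>l\<in>A. l \<bullet> y = 0" "s \<noteq> 0"
    and nonzero: "\<forall>l\<in>P - A. pairing l h * s + complex_of_real (l \<bullet> y) \<noteq> 0"
  defines "q \<equiv> emb P (h + (\<chi> i. (1 / s) * complex_of_real (y $ i)))"
  shows "q \<in> chart P A"
    and "ccoord P A q = (\<lambda>l. if l \<in> P then if l \<in> A then pairing l h
                         else s / (pairing l h * s + complex_of_real (l \<bullet> y)) else 0)"
proof -
  have q: "q l = (if l \<in> P then Some (pairing l h + complex_of_real (l \<bullet> y) / s) else None)" for l
    unfolding q_def emb_def pairing_add_right pairing_scaled_real_right by simp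
  have "pairing l h + complex_of_real (l \<bullet> y) / s \<noteq> 0" if "l \<in> P - A" for l
    using nonzero that \<open>s \<noteq> 0\<close> by (auto simp: field_simps)
  then show "q \<in> chart P A" using q \<open>A \<subseteq> P\<close> unfolding chart_def Pd_def by auto
  have "inverse (pairing l h + complex_of_real (l \<bullet> y) / s)
      = s / (pairing l h * s + complex_of_real (l \<bullet> y))" for l
    using \<open>s \<noteq> 0\<close> by (simp add: field_simps)
  then show "ccoord P A q = (\<lambda>l. if l \<in> P then if l \<in> A then pairing l h
                         else s / (pairing l h * s + complex_of_real (l \<bullet> y)) else 0)"
    using assms(2) q unfolding ccoord_def by (intro ext) auto
qed

lemma eventually_at_0_affine_nonzero:
  fixes a b :: complex
  assumes "b \<noteq> 0"
  shows "eventually (\<lambda>s. a * s + b \<noteq> 0) (at 0)"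
proof -
  have "((\<lambda>s. a * s + b) \<longlongrightarrow> a * 0 + b) (at 0)" by (intro tendsto_intros)
  then show ?thesis using assms tendsto_imp_eventually_ne by fastforce
qed

text \<open>The point of C(S) given by h is the limit, as s \<rightarrow> 0, of h + y/s for a direction y
  orthogonal to S but not to any positive root outside S.\<close>
lemma cell_point_in_zclosed:
  assumes "finite P" "zclosed P Z" "hset P \<subseteq> Z"
    and y0: "\<forall>l\<in>S. l \<bullet> y = 0" and y1: "\<forall>l\<in>P - S. l \<bullet> y \<noteq> 0"
  shows "cell_point P S h \<in> Z"
proof -
  define A where "A = P \<inter> S"
  define b where "b l = complex_of_real (l \<bullet> y)" for l
  define g where "g s = (\<lambda>l. if l \<in> P then if l \<in> A then pairing l h
                         else s / (pairing l h * s + b l) else 0)" for s :: complex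
  have "A \<subseteq> P" unfolding A_def by blast
  have b: "b l \<noteq> 0" if "l \<in> P - A" for l using y1 that unfolding b_def A_def by auto
  have "((\<lambda>s. g s l) \<longlongrightarrow> g 0 l) (at 0)" for l
  proof (cases "l \<in> P - A")
    case True
    then have "((\<lambda>s. s / (pairing l h * s + b l)) \<longlongrightarrow> 0 / (pairing l h * 0 + b l)) (at 0)"
      using b by (intro tendsto_intros) simp
    then show ?thesis using True unfolding g_def by simp
  qed (auto simp: g_def)
  moreover have "g 0 = ccoord P A (cell_point P S h)"
    unfolding g_def ccoord_def A_def cell_point_def by (intro ext) auto
  moreover have "eventually (\<lambda>s. s \<noteq> 0 \<and> (\<forall>l\<in>P - A. pairing l h * s + b l \<noteq> 0)) (at 0)"
    using assms(1) b eventually_at_0_affine_nonzero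
    by (intro eventually_conj eventually_ball_finite) (auto simp: eventually_at_filter)
  then have "eventually (\<lambda>s. \<exists>z\<in>Z \<inter> chart P A. ccoord P A z = g s) (at 0)"
  proof (rule eventually_mono)
    fix s :: complex assume s: "s \<noteq> 0 \<and> (\<forall>l\<in>P - A. pairing l h * s + b l \<noteq> 0)"
    have "\<forall>l\<in>A. l \<bullet> y = 0" using y0 unfolding A_def by blast
    note curve = ccoord_emb_translate[OF \<open>A \<subseteq> P\<close> this, of s h]
    have "emb P (h + (\<chi> i. (1 / s) * complex_of_real (y $ i))) \<in> Z" using assms(3) unfolding hset_def by blast
    then show "\<exists>z\<in>Z \<inter> chart P A. ccoord P A z = g s"
      using curve s unfolding g_def b_def by blast
  qed
  moreover have "cell_point P S h \<in> chart P A"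
    unfolding cell_point_def chart_def Pd_def A_def by auto
  ultimately show ?thesis using zclosed_chart_limit[OF assms(2) \<open>A \<subseteq> P\<close>, of _ "at 0" g] by simp
qed

lemma Cring_subset_zclosed:
  assumes R: "root_system R" and P: "positive_system R P" and S: "root_flat R S"
    and "zclosed P Z" "hset P \<subseteq> Z"
  shows "Cring P S \<subseteq> Z"
proof -
  have "finite P" using positive_system_finite[OF R P] .
  moreover have "\<forall>l\<in>P - S. l \<notin> span S" using S positive_system_subset[OF P] unfolding root_flat_def by blast
  ultimately obtain y where "\<forall>l\<in>S. l \<bullet> y = 0" "\<forall>l\<in>P - S. l \<bullet> y \<noteq> 0"
    using exists_orthogonal_avoiding[of "P - S" S] by blast
  then show ?thesis unfolding Cring_eq_range using cell_point_in_zclosed[OF \<open>finite P\<close> assms(4,5)] by blast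
qed

lemma Cring_root_system:
  assumes "positive_system R P"
  shows "Cring P R = hset P"
proof -
  have "cell_point P R = emb P"
    using positive_system_subset[OF assms] unfolding cell_point_def emb_def by (intro ext) auto
  then show ?thesis unfolding Cring_eq_range hset_def by simp
qed

lemma zclosure_hset:
  assumes R: "root_system R" and P: "positive_system R P"
  shows "zclosure P (hset P) = relation_locus P"
proof
  have "hset P \<subseteq> relation_locus P"
    using Cring_subset_relation_locus[OF R P root_flat_self] Cring_root_system[OF P] by simp
  moreover have "zclosed P (relation_locus P)" using zclosed_relation_locus[OF positive_system_finite[OF R P]] .
  ultimately show "zclosure P (hset P) \<subseteq> relation_locus P" unfolding zclosure_def by blast
  show "relation_locus P \<subseteq> zclosure P (hset P)"
    unfolding zclosure_def using relation_locus_subset_Cring[OF R P] Cring_subset_zclosed[OF R P] by blast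
qed

lemma act_emb: "act y (emb P h) = emb P (h + y)"
  unfolding act_def emb_def by (auto simp: pairing_add_right)

lemma act_zero: "act 0 x = x"
  unfolding act_def by (simp add: pairing_def option.map_ident)

lemma act_add: "act (y + z) x = act y (act z x)"
proof
  fix l show "act (y + z) x l = act y (act z x) l"
    unfolding act_def by (cases "x l") (simp_all add: pairing_add_right algebra_simps)
qed

lemma act_cell_point: "act y (cell_point P S h) = cell_point P S (h + y)"
  unfolding act_def cell_point_def by (auto simp: pairing_add_right)

lemma orbit_cell_point: "orbit (cell_point P S h) = Cring P S"
proof -
  have "cell_point P S h' = cell_point P S (h + (h' - h))" for h' by simp
  then show ?thesis unfolding orbit_def Cring_eq_range act_cell_point by blast
qed

lemma act_Cring: "x \<in> Cring P S \<Longrightarrow> act y x \<in> Cring P S"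
  unfolding Cring_eq_range by (auto simp: act_cell_point)

lemma orbit_Cring: "x \<in> Cring P S \<Longrightarrow> orbit x = Cring P S"
  using orbit_cell_point unfolding Cring_eq_range by (metis rangeE)

lemma Cring_disjoint:
  assumes R: "root_system R" and P: "positive_system R P"
    and "root_flat R S1" "root_flat R S2" "S1 \<noteq> S2"
  shows "Cring P S1 \<inter> Cring P S2 = {}"
proof (rule ccontr)
  assume "Cring P S1 \<inter> Cring P S2 \<noteq> {}"
  then obtain x where "x \<in> Cring P S1" "x \<in> Cring P S2" by blast
  then have "P \<inter> S1 = P \<inter> S2" using Cring_finite_coords by metis
  then show False using root_flat_positive_part_eq[OF R P assms(3,4)] assms(5) by blast
qed

lemma relation_locus_eq_Union_Cring:
  assumes R: "root_system R" and P: "positive_system R P"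
  shows "relation_locus P = \<Union>(Cring P ` {S. root_flat R S})"
  using Cring_subset_relation_locus[OF R P] relation_locus_subset_Cring[OF R P] by blast

lemma orbits_Union_Cring: "{orbit x |x. x \<in> \<Union>(Cring P ` F)} = Cring P ` F"
proof (intro subset_antisym subsetI)
  fix C assume "C \<in> {orbit x |x. x \<in> \<Union>(Cring P ` F)}"
  then show "C \<in> Cring P ` F" using orbit_Cring by blast
next
  fix C assume "C \<in> Cring P ` F"
  then obtain S where "S \<in> F" "C = Cring P S" by blast
  moreover have "cell_point P S 0 \<in> Cring P S" unfolding Cring_eq_range by blast
  ultimately show "C \<in> {orbit x |x. x \<in> \<Union>(Cring P ` F)}" using orbit_Cring by blast
qed

lemma finite_Cring_root_flats:
  assumes "root_system R"
  shows "finite (Cring P ` {S. root_flat R S})"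
proof (rule finite_subset)
  show "Cring P ` {S. root_flat R S} \<subseteq> Cring P ` Pow R" unfolding root_flat_def by blast
  show "finite (Cring P ` Pow R)" using assms unfolding root_system_def by simp
qed

lemma zopen_in_hset:
  assumes R: "root_system R" and P: "positive_system R P"
  shows "zopen_in P (relation_locus P) (hset P)"
  unfolding zopen_in_def
proof (intro conjI exI)
  have "finite P" using positive_system_finite[OF R P] .
  show "hset P \<subseteq> relation_locus P" using zclosure_hset[OF R P] unfolding zclosure_def by blast
  show "zclosed P (few_finite_coords P (card P))" using zclosed_few_finite_coords[OF \<open>finite P\<close>] .
  show "relation_locus P - hset P = relation_locus P \<inter> few_finite_coords P (card P)"
  proof (intro set_eqI iffI)
    fix x assume x: "x \<in> relation_locus P - hset P"
    then obtain S where S: "root_flat R S" "x \<in> Cring P S" using relation_locus_subset_Cring[OF R P] by blast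
    then have "P \<inter> S \<subset> P"
      using x Cring_root_system[OF P] root_flat_positive_part_eq[OF R P S(1) root_flat_self]
        positive_system_subset[OF P] by blast
    then have "card (P \<inter> S) < card P" using \<open>finite P\<close> by (rule psubset_card_mono[rotated])
    then show "x \<in> relation_locus P \<inter> few_finite_coords P (card P)"
      using x Cring_mem_few_finite_coords_iff[OF S(2)] by blast
  next
    fix x assume x: "x \<in> relation_locus P \<inter> few_finite_coords P (card P)"
    have "{l\<in>P. emb P h l \<noteq> None} = P" for h unfolding emb_def by auto
    then have "x \<notin> hset P" using x unfolding few_finite_coords_def hset_def by auto
    then show "x \<in> relation_locus P - hset P" using x by blast
  qed
qed

lemma iso_affine_intro:
  assumes "A \<subseteq> P" "S \<subseteq> chart P A"
    and image: "phi ` aff_space {..<m} = S"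
    and coords: "\<forall>l\<in>P. \<exists>p\<in>poly_fun. \<forall>t\<in>aff_space {..<m}. ccoord P A (phi t) l = p t"
    and left_inv: "\<And>i. i < m \<Longrightarrow> \<exists>q\<in>poly_fun. \<forall>t\<in>aff_space {..<m}. q (ccoord P A (phi t)) = t i"
  shows "iso_affine P S m"
proof -
  have "inj_on phi (aff_space {..<m})"
  proof (rule inj_onI, rule ext)
    fix t t' i assume t: "t \<in> aff_space {..<m}" "t' \<in> aff_space {..<m}" "phi t = phi t'"
    show "t i = t' i"
    proof (cases "i < m")
      case True
      then show ?thesis using left_inv[OF True] t by metis
    qed (use t in \<open>auto simp: aff_space_def\<close>)
  qed
  then have bij: "bij_betw phi (aff_space {..<m}) S" unfolding bij_betw_def using image by blast
  have "\<exists>q\<in>poly_fun. \<forall>x\<in>S. inv_into (aff_space {..<m}) phi x i = q (ccoord P A x)" if i: "i < m" for i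
  proof -
    obtain q where "q \<in> poly_fun" "\<forall>t\<in>aff_space {..<m}. q (ccoord P A (phi t)) = t i"
      using left_inv[OF i] by blast
    moreover have "inv_into (aff_space {..<m}) phi x \<in> aff_space {..<m}"
      and "phi (inv_into (aff_space {..<m}) phi x) = x" if "x \<in> S" for x
      using bij that by (auto simp: bij_betw_def inv_into_into f_inv_into_f)
    ultimately show ?thesis by metis
  qed
  then show ?thesis unfolding iso_affine_def using assms(1,2) bij coords by blast
qed

lemma pairing_representation:
  fixes B :: "(real^'n) set"
  assumes "independent B" "finite B" "l \<in> span B" "bij_betw e {..<m} B"
  shows "pairing l h = (\<Sum>j<m. complex_of_real (representation B l (e j)) * pairing (e j) h)"
proof -
  have "l = (\<Sum>b\<in>B. representation B l b *\<^sub>R b)"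
    using sum_representation_eq[OF assms(1,3,2) order_refl] by simp
  then have "pairing l h = (\<Sum>b\<in>B. complex_of_real (representation B l b) * pairing b h)"
    by (metis (no_types, lifting) pairing_scaleR_left pairing_sum_left sum.cong)
  also have "\<dots> = (\<Sum>j<m. complex_of_real (representation B l (e j)) * pairing (e j) h)"
    using sum.reindex_bij_betw[OF assms(4), of "\<lambda>b. complex_of_real (representation B l b) * pairing b h"]
    by simp
  finally show ?thesis .
qed

text \<open>The point of C(S) with coordinates t(j) at the basis roots e(j) of span S; the other
  finite coordinates are linear in t.\<close>
definition basis_point :: "(real^'n) set \<Rightarrow> (nat \<Rightarrow> real^'n) \<Rightarrow> nat \<Rightarrow> (real^'n) set \<Rightarrow> (nat \<Rightarrow> complex) \<Rightarrow> (real^'n \<Rightarrow> complex option)" where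
  "basis_point B e m V t =
     (\<lambda>l. if l \<in> V then Some (\<Sum>j<m. complex_of_real (representation B l (e j)) * t j) else None)"

lemma basis_point_basis:
  assumes "independent B" "bij_betw e {..<m} B" "B \<subseteq> V" "i < m"
  shows "basis_point B e m V t (e i) = Some (t i)"
proof -
  have "e i \<in> B" using assms(2,4) unfolding bij_betw_def by auto
  have "representation B (e i) (e j) = (if j = i then 1 else 0)" if "j < m" for j
    using representation_basis[OF assms(1) \<open>e i \<in> B\<close>] assms(2,4) that
    unfolding bij_betw_def inj_on_def by auto
  then have "(\<Sum>j<m. complex_of_real (representation B (e i) (e j)) * t j) = (\<Sum>j<m. if j = i then t j else 0)"
    by (intro sum.cong) auto
  then show ?thesis using \<open>e i \<in> B\<close> assms(3,4) unfolding basis_point_def by auto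
qed

lemma basis_point_eq_cell_point:
  assumes "independent B" "finite B" "P \<inter> S \<subseteq> span B" "bij_betw e {..<m} B"
    and "\<forall>j<m. t j = pairing (e j) h"
  shows "basis_point B e m (P \<inter> S) t = cell_point P S h"
  unfolding basis_point_def cell_point_def
  using pairing_representation[OF assms(1,2) _ assms(4)] assms(3,5) by (intro ext) auto

lemma Cring_eq_image_basis_point:
  assumes "independent B" "finite B" "P \<inter> S \<subseteq> span B" "bij_betw e {..<m} B"
  shows "Cring P S = basis_point B e m (P \<inter> S) ` aff_space {..<m}"
proof (intro subset_antisym subsetI)
  fix x assume "x \<in> Cring P S"
  then obtain h where "x = cell_point P S h" unfolding Cring_eq_range by blast
  moreover define t where "t j = (if j < m then pairing (e j) h else 0)" for j
  ultimately have "x = basis_point B e m (P \<inter> S) t" using basis_point_eq_cell_point[OF assms, of t h] by simp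
  moreover have "t \<in> aff_space {..<m}" unfolding aff_space_def t_def by simp
  ultimately show "x \<in> basis_point B e m (P \<inter> S) ` aff_space {..<m}" by blast
next
  fix x assume "x \<in> basis_point B e m (P \<inter> S) ` aff_space {..<m}"
  then obtain t where x: "x = basis_point B e m (P \<inter> S) t" by blast
  obtain h where "\<forall>b\<in>B. pairing b h = t (inv_into {..<m} e b)"
    using exists_pairing_eq_on_independent[OF assms(1), of "\<lambda>b. t (inv_into {..<m} e b)"] by blast
  then have "\<forall>j<m. t j = pairing (e j) h"
    using assms(4) by (auto simp: bij_betw_def inv_into_f_f)
  then have "x = cell_point P S h" unfolding x by (rule basis_point_eq_cell_point[OF assms])
  then show "x \<in> Cring P S" unfolding Cring_eq_range by blast
qed

lemma Cring_iso_affine: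
  assumes R: "root_system R" and P: "positive_system R P" and S: "root_flat R S"
  shows "iso_affine P (Cring P S) (rk S)"
proof -
  define V where "V = P \<inter> S"
  obtain B where B: "B \<subseteq> V" "independent B" "V \<subseteq> span B" "card B = dim V"
    by (rule basis_exists)
  have "finite B" using B(1) positive_system_finite[OF R P] finite_subset unfolding V_def by blast
  have "card B = rk S" unfolding rk_def B(4)
    using span_positive_part[OF R P S] unfolding V_def by (metis dim_span)
  then obtain e where e: "bij_betw e {..<rk S} B"
    using ex_bij_betw_nat_finite[OF \<open>finite B\<close>] by (auto simp: lessThan_atLeast0)
  show ?thesis
  proof (rule iso_affine_intro)
    show "V \<subseteq> P" "Cring P S \<subseteq> chart P V" unfolding V_def chart_def Cring_def by auto
    show "basis_point B e (rk S) V ` aff_space {..<rk S} = Cring P S"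
      using Cring_eq_image_basis_point[OF B(2) \<open>finite B\<close> _ e] B(3) unfolding V_def by simp
    have "(\<lambda>t. \<Sum>j<rk S. complex_of_real (representation B l (e j)) * t j) \<in> poly_fun" for l
      by (intro poly_fun_sum pf_mult pf_const pf_var) auto
    moreover have "ccoord P V (basis_point B e (rk S) V t) l
        = (if l \<in> V then \<Sum>j<rk S. complex_of_real (representation B l (e j)) * t j else 0)"
      if "l \<in> P" for l t
      using that unfolding ccoord_def basis_point_def by simp
    ultimately show "\<forall>l\<in>P. \<exists>p\<in>poly_fun. \<forall>t\<in>aff_space {..<rk S}. ccoord P V (basis_point B e (rk S) V t) l = p t"
      using pf_const[of 0] by (metis (no_types, lifting))
  next
    fix i assume "i < rk S"
    then have "e i \<in> V" "e i \<in> P" using e B(1) unfolding V_def bij_betw_def by auto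
    then have "ccoord P V (basis_point B e (rk S) V t) (e i) = t i" for t
      using basis_point_basis[OF B(2) e B(1) \<open>i < rk S\<close>] unfolding ccoord_def by simp
    then show "\<exists>q\<in>poly_fun. \<forall>t\<in>aff_space {..<rk S}. q (ccoord P V (basis_point B e (rk S) V t)) = t i"
      using pf_var[of "e i"] by (intro bexI[of _ "\<lambda>u. u (e i)"]) auto
  qed
qed

definition cell_level :: "(real^'n) set \<Rightarrow> (real^'n \<Rightarrow> complex option) set \<Rightarrow> nat" where
  "cell_level P C = card {l\<in>P. \<exists>x\<in>C. x l \<noteq> None}"

lemma cell_level_Cring: "cell_level P (Cring P S) = card (P \<inter> S)"
proof -
  have "{l\<in>P. \<exists>x\<in>range (cell_point P S). x l \<noteq> None} = P \<inter> S"
    unfolding cell_point_def by auto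
  then show ?thesis unfolding cell_level_def Cring_eq_range by simp
qed

lemma cells_below_level:
  "{C \<in> Cring P ` F. cell_level P C < c} = Cring P ` {S \<in> F. card (P \<inter> S) < c}"
  by (auto simp: cell_level_Cring)

text \<open>The union of C(S) with all cells of smaller level is closed: it is cut out of the
  closure of h by "fewer finite coordinates than C(S), or none outside P \<inter> S".\<close>
lemma Cring_Un_lower_levels:
  assumes R: "root_system R" and P: "positive_system R P" and S: "root_flat R S"
  shows "Cring P S \<union> \<Union>{C \<in> Cring P ` {S. root_flat R S}. cell_level P C < card (P \<inter> S)}
       = relation_locus P \<inter> (few_finite_coords P (card (P \<inter> S)) \<union> infinite_outside P (P \<inter> S))"
    (is "_ = ?rhs")
  unfolding cells_below_level
proof (intro set_eqI iffI)
  fix x assume "x \<in> Cring P S \<union> \<Union>(Cring P ` {S' \<in> {S. root_flat R S}. card (P \<inter> S') < card (P \<inter> S)})"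
  then obtain S' where S': "root_flat R S'" "x \<in> Cring P S'" "S' = S \<or> card (P \<inter> S') < card (P \<inter> S)"
    using S by blast
  then have "x \<in> few_finite_coords P (card (P \<inter> S)) \<union> infinite_outside P (P \<inter> S)"
    using Cring_mem_few_finite_coords_iff[OF S'(2)] Cring_mem_infinite_outside_iff[OF S'(2)] by auto
  then show "x \<in> ?rhs" using Cring_subset_relation_locus[OF R P S'(1)] S'(2) by blast
next
  fix x assume x: "x \<in> ?rhs"
  then obtain S' where S': "root_flat R S'" "x \<in> Cring P S'" using relation_locus_subset_Cring[OF R P] by blast
  show "x \<in> Cring P S \<union> \<Union>(Cring P ` {S' \<in> {S. root_flat R S}. card (P \<inter> S') < card (P \<inter> S)})"
  proof (cases "card (P \<inter> S') < card (P \<inter> S)")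
    case True
    then show ?thesis using S' by blast
  next
    case False
    then have "x \<notin> few_finite_coords P (card (P \<inter> S))"
      using Cring_mem_few_finite_coords_iff[OF S'(2)] by simp
    then have "x \<in> infinite_outside P (P \<inter> S)" using x by blast
    then have "P \<inter> S' \<subseteq> P \<inter> S" using Cring_mem_infinite_outside_iff[OF S'(2)] by simp
    moreover have "finite (P \<inter> S)" using positive_system_finite[OF R P] by blast
    ultimately have "P \<inter> S' = P \<inter> S" using False by (intro card_seteq) auto
    then show ?thesis using root_flat_positive_part_eq[OF R P S'(1) S] S'(2) by blast
  qed
qed

lemma zclosed_Cring_Un_lower_levels:
  assumes R: "root_system R" and P: "positive_system R P" and S: "root_flat R S"
  shows "zclosed P (Cring P S \<union> \<Union>{C \<in> Cring P ` {S. root_flat R S}. cell_level P C < cell_level P (Cring P S)})"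
  unfolding cell_level_Cring[of P S] Cring_Un_lower_levels[OF assms] using positive_system_finite[OF R P]
  by (intro zclosed_Int zclosed_Un zclosed_relation_locus zclosed_few_finite_coords zclosed_infinite_outside)

theorem mainTheorem6:
  fixes R P :: "(real^'n) set"
  assumes "root_system R" and "positive_system R P"
  defines "hbar \<equiv> zclosure P (hset P)"
      and "r \<equiv> CARD('n)"
      and "cells \<equiv> {Cring P S | S k. k \<le> CARD('n) \<and> kstep_good R k S}"
  shows "(\<forall>y h. act y (emb P h) = emb P (h + y))
    \<and> (\<forall>x :: real^'n \<Rightarrow> complex option. act 0 x = x)
    \<and> (\<forall>(y :: complex^'n) z (x :: real^'n \<Rightarrow> complex option). act (y + z) x = act y (act z x))
    \<and> (\<forall>y. \<forall>x\<in>hbar. act y x \<in> hbar)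
    \<and> hbar = \<Union>cells
    \<and> (\<forall>S1 S2 k1 k2. k1 \<le> r \<and> kstep_good R k1 S1 \<and> k2 \<le> r \<and> kstep_good R k2 S2 \<and> S1 \<noteq> S2
          \<longrightarrow> Cring P S1 \<inter> Cring P S2 = {})
    \<and> {orbit x | x. x \<in> hbar} = cells
    \<and> finite cells
    \<and> Cring P R = hset P \<and> zopen_in P hbar (hset P)
    \<and> (\<forall>k S. k \<le> r \<and> kstep_good R k S \<longrightarrow> rk S = r - k \<and> iso_affine P (Cring P S) (rk S))
    \<and> (\<exists>lev :: (real^'n \<Rightarrow> complex option) set \<Rightarrow> nat.
          \<forall>C\<in>cells. zclosed P (C \<union> \<Union>{C'\<in>cells. lev C' < lev C}))"
proof -
  note R = assms(1) and P = assms(2)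
  have cells: "cells = Cring P ` {S. root_flat R S}"
    unfolding cells_def using kstep_good_iff_root_flat[OF R] by blast
  have hbar: "hbar = relation_locus P"
    unfolding hbar_def using zclosure_hset[OF R P] .
  have union: "hbar = \<Union>cells"
    unfolding hbar cells by (rule relation_locus_eq_Union_Cring[OF R P])
  have kstep: "root_flat R S \<and> rk S = r - k" if "kstep_good R k S" for k S
    using kstep_good_root_flat[OF R that] unfolding r_def by auto
  show ?thesis
  proof (intro conjI allI impI ballI)
    show "act y (emb P h) = emb P (h + y)" for y h by (rule act_emb)
    show "act 0 x = x" for x :: "real^'n \<Rightarrow> complex option" by (rule act_zero)
    show "act (y + z) x = act y (act z x)" for y z :: "complex^'n" and x :: "real^'n \<Rightarrow> complex option"
      by (rule act_add)
    show "act y x \<in> hbar" if "x \<in> hbar" for x y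
      using that act_Cring unfolding union cells by blast
    show "hbar = \<Union>cells" by (rule union)
    show "Cring P S1 \<inter> Cring P S2 = {}"
      if "k1 \<le> r \<and> kstep_good R k1 S1 \<and> k2 \<le> r \<and> kstep_good R k2 S2 \<and> S1 \<noteq> S2" for S1 S2 k1 k2
      using that kstep Cring_disjoint[OF R P] by blast
    show "{orbit x | x. x \<in> hbar} = cells"
      unfolding union cells by (rule orbits_Union_Cring)
    show "finite cells" unfolding cells by (rule finite_Cring_root_flats[OF R])
    show "Cring P R = hset P" by (rule Cring_root_system[OF P])
    show "zopen_in P hbar (hset P)" unfolding hbar by (rule zopen_in_hset[OF R P])
    show "rk S = r - k" "iso_affine P (Cring P S) (rk S)"
      if "k \<le> r \<and> kstep_good R k S" for k S
      using that kstep Cring_iso_affine[OF R P] by blast+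
    show "\<exists>lev :: (real^'n \<Rightarrow> complex option) set \<Rightarrow> nat. \<forall>C\<in>cells. zclosed P (C \<union> \<Union>{C'\<in>cells. lev C' < lev C})"
    proof (intro exI[of _ "cell_level P"] ballI)
      fix C assume "C \<in> cells"
      then obtain S where "root_flat R S" "C = Cring P S" unfolding cells by blast
      then show "zclosed P (C \<union> \<Union>{C'\<in>cells. cell_level P C' < cell_level P C})"
        unfolding cells using zclosed_Cring_Un_lower_levels[OF R P] by simp
    qed
  qed
qed

end
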